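(* Let $d \geq 3$ and $1 \leq r < \frac{d}{2}$ be integers, and let $q = e^{2\pi i\tau}$ with $\tau$ in the upper half-plane. Then \[ \mathscr{C}_{d,r}(q) = -q^{-\frac{d}{12} + \frac{r}{2}} \frac{\vartheta\left(\frac12 + r\tau; d\tau\right)}{\eta(d\tau)}\, g_3\left(-q^r; q^d\right). \]
   Context: $C_{d,r}(n)$ counts partitions $\lambda_1 \geq \dots \geq \lambda_k$ of $n$ such that every part is congruent to $0, \pm r \pmod d$, consecutive parts satisfy $\lambda_i - \lambda_{i+1} \geq d$, with $\lambda_i - \lambda_{i+1} > d$ whenever $d \mid \lambda_i$, and the smallest part is larger than $d$; $\mathscr{C}_{d,r}(q) := \sum_{n\geq0} C_{d,r}(n)q^n$ (with $C_{d,r}(0)=1$). Here $q^{a} := e^{2\pi i a\tau}$ for rational $a$; $\eta(\tau) := q^{1/24}\prod_{n \geq 1}(1-q^n)$; $\vartheta(w;\tau) := \sum_{n \in \frac12 + \mathbb{Z}} e^{\pi i n^2 \tau + 2\pi i n (w + \frac12)}$; $(a;q)_n := \prod_{j=0}^{n-1}(1-aq^j)$; and Hickerson's universal mock theta function is $g_3(x;q) := \sum_{n \geq 0} \frac{q^{n(n+1)}}{(x;q)_{n+1}(x^{-1}q;q)_{n+1}}$. *)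

theory Defs
  imports "HOL-Analysis.Analysis"
begin

definition valid_C_partition :: "nat \<Rightarrow> nat \<Rightarrow> nat list \<Rightarrow> bool" where
  "valid_C_partition d r xs \<longleftrightarrow>
     (\<forall>x\<in>set xs. x mod d = 0 \<or> x mod d = r \<or> x mod d = d - r) \<and>
     (\<forall>i. Suc i < length xs \<longrightarrow>
          xs ! Suc i + d \<le> xs ! i \<and> (d dvd xs ! i \<longrightarrow> xs ! Suc i + d < xs ! i)) \<and>
     (xs \<noteq> [] \<longrightarrow> last xs > d)"

definition C_count :: "nat \<Rightarrow> nat \<Rightarrow> nat \<Rightarrow> nat" where
  "C_count d r n = card {xs. sum_list xs = n \<and> valid_C_partition d r xs}"

definition C_gen :: "nat \<Rightarrow> nat \<Rightarrow> complex \<Rightarrow> complex" where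
  "C_gen d r q = (\<Sum>n. of_nat (C_count d r n) * q ^ n)"

text \<open>q^a := exp(2 pi i a tau) for real (rational) a.\<close>
definition qpow :: "complex \<Rightarrow> real \<Rightarrow> complex" where
  "qpow \<tau> a = exp (2 * of_real pi * \<i> * of_real a * \<tau>)"

definition dedekind_eta :: "complex \<Rightarrow> complex" where
  "dedekind_eta \<tau> = qpow \<tau> (1/24) * (\<Prod>n. (1 - qpow \<tau> 1 ^ Suc n))"

definition jtheta :: "complex \<Rightarrow> complex \<Rightarrow> complex" where
  "jtheta w \<tau> = infsum (\<lambda>m::int. let n = (of_int m + 1/2 :: complex) in
      exp (of_real pi * \<i> * n^2 * \<tau> + 2 * of_real pi * \<i> * n * (w + 1/2))) UNIV"

definition qpoch :: "complex \<Rightarrow> complex \<Rightarrow> nat \<Rightarrow> complex" where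
  "qpoch a q n = (\<Prod>j<n. (1 - a * q ^ j))"

definition g3 :: "complex \<Rightarrow> complex \<Rightarrow> complex" where
  "g3 x q = (\<Sum>n. q ^ (n * (n + 1)) / (qpoch x q (n + 1) * qpoch (inverse x * q) q (n + 1)))"

end

theory Submission
  imports Defs
begin

text \<open>Write Q = q^d, a = q^r, b = q^(d-r). Listing the parts in increasing order and removing
  the smallest one shows that the generating functions G_j of the partitions with all parts at
  least dj + 1 satisfy G_j = (1 + (a + b) Q^j) G_(j+1) + Q^(j+1) (1 - Q^(j+1)) G_(j+2), and
  G_j tends to 1. With P(y) = (-ay;Q)_\<infinity> (-by;Q)_\<infinity>, the series
  K(x) = sum_n x^n Q^(n^2) (x;Q)_n / (Q;Q)_n P(x Q^n) satisfies the same recurrence at x = Q^j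
  and also tends to 1. As the coefficients of the recurrence differ from (1, 0) by a summable
  amount, a solution tending to 0 vanishes, so the generating function is
  G_1 = K(Q) = P(1) g3(-a; Q). Finally the Jacobi triple product identifies P(1) with the
  theta quotient.\<close>

section \<open>Infinite products and \<open>q\<close>-Pochhammer symbols\<close>

lemma norm_power_less_one:
  fixes q :: complex
  assumes "norm q < 1" and "0 < n"
  shows "norm (q ^ n) < 1"
  using assms by (simp add: norm_power power_less_one_iff)

lemma convergent_prod_1_plus:
  fixes f :: "nat \<Rightarrow> complex"
  assumes "summable (\<lambda>n. norm (f n))"
  shows "convergent_prod (\<lambda>n. 1 + f n)"
  by (rule abs_convergent_prod_imp_convergent_prod, rule summable_imp_abs_convergent_prod)
    (simp add: assms)

lemma norm_prodinf_1_plus_minus_1_le: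
  fixes f :: "nat \<Rightarrow> complex"
  assumes f: "summable (\<lambda>n. norm (f n))"
  shows "norm ((\<Prod>n. 1 + f n) - 1) \<le> exp (\<Sum>n. norm (f n)) - 1"
proof -
  have lim: "(\<lambda>n. \<Prod>i\<le>n. 1 + f i) \<longlonglongrightarrow> (\<Prod>n. 1 + f n)"
    by (rule convergent_prod_LIMSEQ[OF convergent_prod_1_plus[OF f]])
  have partial: "norm ((\<Prod>i\<le>n. 1 + f i) - 1) \<le> exp (\<Sum>n. norm (f n)) - 1" for n
  proof -
    have "norm ((\<Prod>i\<le>n. 1 + f i) - 1) \<le> (\<Prod>i\<le>n. 1 + norm (f i)) - 1"
      by (rule norm_prod_minus1_le_prod_minus1)
    also have "\<dots> \<le> exp (\<Sum>i\<le>n. norm (f i)) - 1"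
      using prod_le_exp_sum[of "{..n}" "\<lambda>i. norm (f i)"] by simp
    also have "\<dots> \<le> exp (\<Sum>n. norm (f n)) - 1"
      using sum_le_suminf[OF f, of "{..n}"] by simp
    finally show ?thesis .
  qed
  show ?thesis
    by (rule LIMSEQ_le_const2[OF tendsto_norm[OF tendsto_diff[OF lim tendsto_const]]])
      (use partial in auto)
qed

lemma prod_1_plus_geometric_le_exp:
  fixes C \<rho> :: real
  assumes "0 \<le> C" "0 \<le> \<rho>" "\<rho> < 1"
  shows "(\<Prod>i<k. 1 + C * \<rho> ^ (j + i)) \<le> exp (C / (1 - \<rho>))"
proof -
  have "(\<Prod>i<k. 1 + C * \<rho> ^ (j + i)) \<le> exp (\<Sum>i<k. C * \<rho> ^ (j + i))"
    by (rule prod_le_exp_sum) (use assms in auto)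
  also have "(\<Sum>i<k. C * \<rho> ^ (j + i)) \<le> (\<Sum>i<k. C * \<rho> ^ i)"
    by (intro sum_mono mult_left_mono power_decreasing) (use assms in auto)
  also have "\<dots> \<le> (\<Sum>i. C * \<rho> ^ i)"
    by (intro sum_le_suminf summable_mult summable_geometric) (use assms in auto)
  also have "\<dots> = C / (1 - \<rho>)"
    using suminf_geometric[of \<rho>] assms by (simp add: suminf_mult divide_simps)
  finally show ?thesis by simp
qed

lemma qpoch_0 [simp]: "qpoch a q 0 = 1"
  by (simp add: qpoch_def)

lemma qpoch_Suc: "qpoch a q (Suc n) = qpoch a q n * (1 - a * q ^ n)"
  by (simp add: qpoch_def)

lemma qpoch_Suc_left: "qpoch a q (Suc n) = (1 - a) * qpoch (a * q) q n"
  unfolding qpoch_def by (subst prod.lessThan_Suc_shift) (simp add: mult.assoc)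

lemma norm_qpoch_le:
  assumes "norm Q < 1"
  shows "norm (qpoch x Q n) \<le> exp (norm x / (1 - norm Q))"
proof -
  have "norm (qpoch x Q n) = (\<Prod>j<n. norm (1 - x * Q ^ j))"
    by (simp add: qpoch_def prod_norm)
  also have "\<dots> \<le> (\<Prod>j<n. 1 + norm x * norm Q ^ j)"
    by (intro prod_mono conjI)
      (auto intro: order.trans[OF norm_triangle_ineq4] simp: norm_mult norm_power)
  also have "\<dots> \<le> exp (\<Sum>j<n. norm x * norm Q ^ j)"
    by (rule prod_le_exp_sum) simp
  also have "(\<Sum>j<n. norm x * norm Q ^ j) \<le> (\<Sum>j. norm x * norm Q ^ j)"
    by (intro sum_le_suminf summable_mult summable_geometric) (auto simp: assms)
  also have "(\<Sum>j. norm x * norm Q ^ j) = norm x / (1 - norm Q)"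
    using suminf_geometric[of "norm Q"] assms by (simp add: suminf_mult divide_simps)
  finally show ?thesis by simp
qed

lemma qpoch_self_nonzero:
  assumes "norm Q < 1"
  shows "qpoch Q Q n \<noteq> 0"
proof -
  have "Q * Q ^ j \<noteq> 1" for j
    using norm_power_less_one[OF assms, of "Suc j"] by auto
  then show ?thesis by (auto simp: qpoch_def)
qed

lemma qpoch_self_bounded_below:
  assumes Q: "norm Q < 1"
  obtains c where "c > 0" "\<And>n. c \<le> norm (qpoch Q Q n)"
proof -
  define g where "g j = 1 - norm Q ^ Suc j" for j
  have g_pos: "g j > 0" for j
    using Q by (simp add: g_def power_less_one_iff del: power_Suc)
  have "summable (\<lambda>j. norm (g j - 1))"
    using Q by (simp add: g_def summable_mult summable_geometric)
  then have conv: "convergent_prod g"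
    by (intro abs_convergent_prod_imp_convergent_prod summable_imp_abs_convergent_prod) auto
  have "prodinf g \<le> prod g {..<n}" for n
    by (rule prod_ge_prodinf)
      (use conv g_pos Q in \<open>auto simp: g_def convergent_prod_has_prod less_imp_le\<close>)
  moreover have "prod g {..<n} \<le> norm (qpoch Q Q n)" for n
  proof -
    have "prod g {..<n} \<le> (\<Prod>j<n. norm (1 - Q * Q ^ j))"
    proof (intro prod_mono conjI)
      fix j
      show "0 \<le> g j" using g_pos[of j] by simp
      have "1 - norm (Q * Q ^ j) \<le> norm (1 - Q * Q ^ j)"
        by (metis norm_one norm_triangle_ineq2)
      then show "g j \<le> norm (1 - Q * Q ^ j)"
        by (simp add: g_def norm_mult norm_power)
    qed
    then show ?thesis by (simp add: qpoch_def prod_norm)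
  qed
  ultimately show ?thesis
    using that[of "prodinf g"] less_0_prodinf[OF conv g_pos] order.trans by blast
qed

definition qpoch_inf :: "complex \<Rightarrow> complex" where
  "qpoch_inf Q = (\<Prod>j. 1 - Q ^ Suc j)"

lemma convergent_prod_qpoch_inf:
  fixes Q :: complex
  assumes "norm Q < 1"
  shows "convergent_prod (\<lambda>j. 1 - Q ^ Suc j)"
proof -
  have "summable (\<lambda>j. norm Q ^ Suc j)"
    using assms by (simp add: summable_mult summable_geometric)
  then show ?thesis
    using convergent_prod_1_plus[of "\<lambda>j. - (Q ^ Suc j)"] by (simp add: norm_power del: power_Suc)
qed

lemma qpoch_self_tendsto: "norm Q < 1 \<Longrightarrow> (\<lambda>m. qpoch Q Q m) \<longlonglongrightarrow> qpoch_inf Q"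
  unfolding qpoch_inf_def qpoch_def power_Suc[symmetric]
  using convergent_prod_LIMSEQ[OF convergent_prod_qpoch_inf] LIMSEQ_lessThan_iff_atMost by blast

lemma qpoch_inf_nonzero:
  assumes "norm Q < 1"
  shows "qpoch_inf Q \<noteq> 0"
  unfolding qpoch_inf_def
proof (rule prodinf_nonzero[OF convergent_prod_qpoch_inf[OF assms]])
  show "1 - Q ^ Suc i \<noteq> 0" for i
    using norm_power_less_one[OF assms, of "Suc i"] by auto
qed

section \<open>Gaussian binomial coefficients and the Jacobi triple product\<close>

definition qbinom :: "complex \<Rightarrow> nat \<Rightarrow> nat \<Rightarrow> complex" where
  "qbinom Q N j = (if j \<le> N then qpoch Q Q N / (qpoch Q Q j * qpoch Q Q (N - j)) else 0)"

lemma qbinom_0 [simp]: "norm Q < 1 \<Longrightarrow> qbinom Q N 0 = 1"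
  by (simp add: qbinom_def qpoch_self_nonzero)

lemma qbinom_self [simp]: "norm Q < 1 \<Longrightarrow> qbinom Q N N = 1"
  by (simp add: qbinom_def qpoch_self_nonzero)

lemma qbinom_eq_0 [simp]: "N < j \<Longrightarrow> qbinom Q N j = 0"
  by (simp add: qbinom_def)

lemma qbinom_Suc_Suc:
  assumes Q: "norm Q < 1"
  shows "qbinom Q (Suc N) (Suc j) = qbinom Q N (Suc j) + Q ^ (N - j) * qbinom Q N j"
proof (cases "j < N")
  case True
  then obtain m where N: "N = j + Suc m" by (metis add_Suc_right less_imp_Suc_add)
  have nz: "qpoch Q Q n \<noteq> 0" for n using qpoch_self_nonzero[OF Q] .
  have f1: "1 - Q * Q ^ k \<noteq> 0" for k using nz[of "Suc k"] by (simp add: qpoch_Suc)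
  have e1: "Suc N - Suc j = Suc m" "N - Suc j = m" "N - j = Suc m" using N by auto
  have "qbinom Q (Suc N) (Suc j) = qpoch Q Q N * (1 - Q * Q ^ N) /
      (qpoch Q Q j * (1 - Q * Q ^ j) * (qpoch Q Q m * (1 - Q * Q ^ m)))"
    using N by (simp add: qbinom_def e1 qpoch_Suc)
  also have "\<dots> = qpoch Q Q N / (qpoch Q Q j * (1 - Q * Q ^ j) * qpoch Q Q m)
     + (Q * Q ^ m) * (qpoch Q Q N / (qpoch Q Q j * (qpoch Q Q m * (1 - Q * Q ^ m))))"
  proof -
    have "Q * Q ^ N = (Q * Q ^ m) * (Q * Q ^ j)"
      unfolding N by (simp add: power_add algebra_simps)
    then have split: "1 - Q * Q ^ N = (1 - Q * Q ^ j) + (1 - Q * Q ^ m) - (1 - Q * Q ^ j) * (1 - Q * Q ^ m)"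
      by (auto simp: algebra_simps)
    have gen: "F * (a + b - a * b) / (A * a * (B * b)) = F / (A * a * B) + w * (F / (A * (B * b)))"
      if "A \<noteq> 0" "B \<noteq> 0" "a \<noteq> 0" "b \<noteq> 0" "w = 1 - b" for F A B a b w :: complex
      using that(1-4) unfolding that(5) by (simp add: field_simps)
    show ?thesis
      by (subst split, rule gen) (use nz f1 in auto)
  qed
  also have "\<dots> = qbinom Q N (Suc j) + Q ^ (N - j) * qbinom Q N j"
    using N by (simp add: qbinom_def e1 qpoch_Suc)
  finally show ?thesis .
next
  case False
  then show ?thesis using Q by (cases "j = N") auto
qed

fun triangular :: "nat \<Rightarrow> nat" where
  "triangular 0 = 0"
| "triangular (Suc i) = triangular i + i"

lemma of_nat_triangular:
  "(of_nat (triangular i) :: 'a::field_char_0) = of_nat i * (of_nat i - 1) / 2"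
  by (induction i) (simp_all add: field_simps)

lemma sum_lessThan_eq_triangular: "(\<Sum>s<n. s) = triangular n"
  by (induction n) simp_all

lemma q_binomial_theorem:
  fixes Q x y :: complex
  assumes Q: "norm Q < 1"
  shows "(\<Prod>j<N. y + x * Q ^ j) = (\<Sum>i\<le>N. qbinom Q N i * Q ^ triangular i * x ^ i * y ^ (N - i))"
proof (induction N)
  case 0
  then show ?case using Q by simp
next
  case (Suc N)
  define c where "c N i = qbinom Q N i * Q ^ triangular i * x ^ i" for N i
  have IH: "(\<Prod>j<N. y + x * Q ^ j) = (\<Sum>i\<le>N. c N i * y ^ (N - i))"
    using Suc by (simp add: c_def)
  have c_Suc: "c (Suc N) (Suc i) = c N (Suc i) + x * Q ^ N * c N i" if "i \<le> N" for i
  proof -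
    have "Q ^ (N - i) * Q ^ triangular (Suc i) = Q ^ N * Q ^ triangular i"
      using that by (simp add: power_add[symmetric])
    then show ?thesis
      by (simp add: c_def qbinom_Suc_Suc[OF Q] algebra_simps)
  qed
  have c0: "c M 0 = 1" for M using Q by (simp add: c_def)
  have cN: "c N (Suc N) = 0" by (simp add: c_def)
  have "(\<Sum>i\<le>Suc N. c (Suc N) i * y ^ (Suc N - i))
      = y ^ Suc N + (\<Sum>i\<le>N. c (Suc N) (Suc i) * y ^ (N - i))"
    by (subst sum.atMost_Suc_shift) (simp add: c0)
  also have "\<dots> = y ^ Suc N + (\<Sum>i\<le>N. c N (Suc i) * y ^ (N - i))
      + x * Q ^ N * (\<Sum>i\<le>N. c N i * y ^ (N - i))"
    by (simp add: c_Suc sum.distrib sum_distrib_left algebra_simps)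
  also have "y ^ Suc N + (\<Sum>i\<le>N. c N (Suc i) * y ^ (N - i)) = y * (\<Sum>i\<le>N. c N i * y ^ (N - i))"
  proof -
    have "(\<Sum>i\<le>N. c N i * y ^ (N - i)) = y ^ N + (\<Sum>i<N. c N (Suc i) * y ^ (N - Suc i))"
      by (subst sum.atMost_shift) (simp add: c0)
    moreover have "(\<Sum>i\<le>N. c N (Suc i) * y ^ (N - i)) = (\<Sum>i<N. c N (Suc i) * y ^ (N - i))"
      by (simp add: lessThan_Suc_atMost[symmetric] cN)
    moreover have "(\<Sum>i<N. y * (c N (Suc i) * y ^ (N - Suc i))) = (\<Sum>i<N. c N (Suc i) * y ^ (N - i))"
      by (rule sum.cong) (auto simp: Suc_diff_Suc[symmetric] algebra_simps)
    ultimately show ?thesis by (simp add: sum_distrib_left algebra_simps)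
  qed
  finally have "(\<Sum>i\<le>Suc N. c (Suc N) i * y ^ (Suc N - i)) = (y + x * Q ^ N) * (\<Prod>j<N. y + x * Q ^ j)"
    by (simp add: IH algebra_simps)
  then show ?case by (simp add: c_def mult.commute)
qed

text \<open>The exponent of \<open>Q\<close> attached to \<open>z\<^sup>i\<close> in the expansion of the
  symmetric partial triple product of length \<open>2n\<close>.\<close>

definition jtp_exponent :: "nat \<Rightarrow> nat \<Rightarrow> nat" where
  "jtp_exponent n i = (if n \<le> i then triangular (i - n + 1) else triangular (n - i))"

lemma triangular_shift_eq:
  assumes "n = Suc p" "i \<le> 2 * n"
  shows "triangular i + p * (2 * n - i) = jtp_exponent n i + (triangular n + p * n)"
proof -
  have "real (triangular i + p * (2 * n - i)) = real (jtp_exponent n i + (triangular n + p * n))"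
    using assms by (cases "n \<le> i")
      (simp_all add: jtp_exponent_def of_nat_triangular of_nat_diff field_simps)
  then show ?thesis by (simp only: of_nat_eq_iff)
qed

lemma prod_power_plus_reflect:
  fixes Q z :: complex
  assumes "n = Suc p"
  shows "(\<Prod>j<n. Q ^ p + z * Q ^ j) = Q ^ triangular n * (\<Prod>s<n. z + Q ^ s)"
proof -
  have "(\<Prod>j<n. Q ^ p + z * Q ^ j) = (\<Prod>s<n. Q ^ p + z * Q ^ (n - Suc s))"
    by (rule prod.nat_diff_reindex[symmetric])
  also have "\<dots> = (\<Prod>s<n. Q ^ (n - Suc s) * (z + Q ^ s))"
  proof (rule prod.cong)
    fix s assume "s \<in> {..<n}"
    then have "Q ^ p = Q ^ (n - Suc s) * Q ^ s" using assms by (simp add: power_add[symmetric])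
    then show "Q ^ p + z * Q ^ (n - Suc s) = Q ^ (n - Suc s) * (z + Q ^ s)" by (simp add: algebra_simps)
  qed simp
  also have "\<dots> = Q ^ (\<Sum>s<n. n - Suc s) * (\<Prod>s<n. z + Q ^ s)"
    by (simp add: prod.distrib power_sum)
  also have "(\<Sum>s<n. n - Suc s) = triangular n"
    using sum.nat_diff_reindex[of "\<lambda>s. s" n] by (simp add: sum_lessThan_eq_triangular)
  finally show ?thesis .
qed

lemma triple_product_partial_poly:
  fixes Q z :: complex
  assumes Q: "norm Q < 1" "Q \<noteq> 0"
  shows "(\<Prod>t<n. 1 + z * Q ^ Suc t) * (\<Prod>s<n. z + Q ^ s)
    = (\<Sum>i\<le>2 * n. qbinom Q (2 * n) i * Q ^ jtp_exponent n i * z ^ i)"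
proof (cases n)
  case 0
  then show ?thesis using Q by (simp add: jtp_exponent_def)
next
  case (Suc p)
  have split: "(\<Prod>j<2 * n. Q ^ p + z * Q ^ j) = (\<Prod>j<n. Q ^ p + z * Q ^ j) * (\<Prod>t<n. Q ^ p + z * Q ^ (n + t))"
    using prod.atLeastLessThan_concat[of 0 n "2 * n" "\<lambda>j. Q ^ p + z * Q ^ j"]
    by (simp add: mult_2 atLeast0LessThan prod.shift_bounds_nat_ivl[of _ 0 n n, simplified add_0] add.commute)
  have upper: "(\<Prod>t<n. Q ^ p + z * Q ^ (n + t)) = Q ^ (p * n) * (\<Prod>t<n. 1 + z * Q ^ Suc t)"
  proof -
    have "Q ^ p + z * Q ^ (n + t) = Q ^ p * (1 + z * Q ^ Suc t)" for t
      using Suc by (simp add: power_add algebra_simps)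
    then show ?thesis by (simp add: prod.distrib power_mult)
  qed
  have lower: "(\<Prod>j<n. Q ^ p + z * Q ^ j) = Q ^ triangular n * (\<Prod>s<n. z + Q ^ s)"
    using Suc by (rule prod_power_plus_reflect)
  have expansion: "(\<Sum>i\<le>2 * n. qbinom Q (2 * n) i * Q ^ triangular i * z ^ i * (Q ^ p) ^ (2 * n - i))
      = Q ^ (triangular n + p * n) * (\<Sum>i\<le>2 * n. qbinom Q (2 * n) i * Q ^ jtp_exponent n i * z ^ i)"
    unfolding sum_distrib_left
  proof (rule sum.cong)
    fix i assume "i \<in> {..2 * n}"
    then have "triangular i + p * (2 * n - i) = jtp_exponent n i + (triangular n + p * n)"
      using triangular_shift_eq[OF Suc] by simp
    then have "Q ^ triangular i * (Q ^ p) ^ (2 * n - i) = Q ^ (triangular n + p * n) * Q ^ jtp_exponent n i"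
      by (simp add: power_mult[symmetric] power_add[symmetric] add.commute)
    then show "qbinom Q (2 * n) i * Q ^ triangular i * z ^ i * (Q ^ p) ^ (2 * n - i)
        = Q ^ (triangular n + p * n) * (qbinom Q (2 * n) i * Q ^ jtp_exponent n i * z ^ i)"
      by (simp add: algebra_simps)
  qed simp
  have "Q ^ (triangular n + p * n) * ((\<Prod>t<n. 1 + z * Q ^ Suc t) * (\<Prod>s<n. z + Q ^ s))
      = Q ^ (triangular n + p * n) * (\<Sum>i\<le>2 * n. qbinom Q (2 * n) i * Q ^ jtp_exponent n i * z ^ i)"
    using q_binomial_theorem[OF Q(1), where N = "2 * n" and y = "Q ^ p" and x = z] split lower upper expansion
    by (simp add: power_add algebra_simps)
  then show ?thesis using Q(2) by simp
qed

lemma triple_product_partial: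
  fixes Q z :: complex
  assumes Q: "norm Q < 1" "Q \<noteq> 0" and z: "z \<noteq> 0"
  shows "(\<Prod>t<n. 1 + z * Q ^ Suc t) * (\<Prod>s<n. 1 + inverse z * Q ^ s) =
     (\<Sum>k\<le>n. qbinom Q (2 * n) (n + k) * Q ^ triangular (Suc k) * z ^ k)
     + (\<Sum>k<n. qbinom Q (2 * n) (n - Suc k) * Q ^ triangular (Suc k) * inverse z ^ Suc k)"
proof -
  define f where "f i = qbinom Q (2 * n) i * Q ^ jtp_exponent n i * z ^ i" for i
  have scale: "(\<Prod>s<n. z + Q ^ s) = z ^ n * (\<Prod>s<n. 1 + inverse z * Q ^ s)"
  proof -
    have "z + Q ^ s = z * (1 + inverse z * Q ^ s)" for s using z by (simp add: field_simps)
    then show ?thesis by (simp add: prod.distrib)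
  qed
  have halves: "(\<Sum>i\<le>2 * n. f i) = (\<Sum>k<n. f (n - Suc k)) + (\<Sum>k\<le>n. f (n + k))"
  proof -
    have "(\<Sum>i\<le>2 * n. f i) = (\<Sum>i<n. f i) + (\<Sum>i\<in>{n..2 * n}. f i)"
      by (subst sum.union_disjoint[symmetric]) (auto intro: sum.cong)
    also have "(\<Sum>i\<in>{n..2 * n}. f i) = (\<Sum>k\<le>n. f (k + n))"
      using sum.shift_bounds_cl_nat_ivl[of f 0 n n] by (simp add: mult_2 atLeast0AtMost)
    also have "\<dots> = (\<Sum>k\<le>n. f (n + k))"
      by (simp only: add.commute)
    also have "(\<Sum>i<n. f i) = (\<Sum>k<n. f (n - Suc k))" by (rule sum.nat_diff_reindex[symmetric])
    finally show ?thesis .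
  qed
  have upper: "f (n + k) = z ^ n * (qbinom Q (2 * n) (n + k) * Q ^ triangular (Suc k) * z ^ k)" for k
    by (simp add: f_def jtp_exponent_def power_add algebra_simps)
  have lower: "f (n - Suc k) = z ^ n * (qbinom Q (2 * n) (n - Suc k) * Q ^ triangular (Suc k) * inverse z ^ Suc k)"
    if "k < n" for k
  proof -
    have "z ^ n = z ^ (n - Suc k) * z ^ Suc k"
      using that by (metis Suc_leI le_add_diff_inverse2 power_add)
    then have "z ^ (n - Suc k) = z ^ n * inverse z ^ Suc k"
      using z by (simp add: field_simps power_inverse)
    moreover have "jtp_exponent n (n - Suc k) = triangular (Suc k)"
      using that by (simp add: jtp_exponent_def Suc_diff_Suc)
    ultimately show ?thesis by (simp add: f_def algebra_simps)
  qed
  have "z ^ n * ((\<Prod>t<n. 1 + z * Q ^ Suc t) * (\<Prod>s<n. 1 + inverse z * Q ^ s))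
      = (\<Sum>i\<le>2 * n. f i)"
    unfolding f_def using triple_product_partial_poly[OF Q, where n = n and z = z] by (simp add: scale algebra_simps)
  also have "\<dots> = z ^ n * ((\<Sum>k\<le>n. qbinom Q (2 * n) (n + k) * Q ^ triangular (Suc k) * z ^ k)
     + (\<Sum>k<n. qbinom Q (2 * n) (n - Suc k) * Q ^ triangular (Suc k) * inverse z ^ Suc k))"
    by (simp add: halves upper lower sum_distrib_left distrib_left)
  finally show ?thesis using z by simp
qed

lemma qbinom_central_tendsto:
  assumes Q: "norm Q < 1"
  shows "(\<lambda>n. qbinom Q (2 * n) (n + k)) \<longlonglongrightarrow> 1 / qpoch_inf Q"
    and "(\<lambda>n. qbinom Q (2 * n) (n - Suc k)) \<longlonglongrightarrow> 1 / qpoch_inf Q"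
proof -
  have lim: "(\<lambda>n. qpoch Q Q (2 * n) / (qpoch Q Q (n + k) * qpoch Q Q (n - k))) \<longlonglongrightarrow> 1 / qpoch_inf Q"
    for k
  proof -
    have "(\<lambda>n. qpoch Q Q (2 * n) / (qpoch Q Q (n + k) * qpoch Q Q (n - k)))
        \<longlonglongrightarrow> qpoch_inf Q / (qpoch_inf Q * qpoch_inf Q)"
      by (intro tendsto_intros filterlim_compose[OF qpoch_self_tendsto[OF Q]]
          filterlim_add_const_nat_at_top filterlim_minus_const_nat_at_top mult_nat_left_at_top)
        (use qpoch_inf_nonzero[OF Q] in auto)
    then show ?thesis using qpoch_inf_nonzero[OF Q] by simp
  qed
  have "eventually (\<lambda>n. qpoch Q Q (2 * n) / (qpoch Q Q (n + k) * qpoch Q Q (n - k))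
      = qbinom Q (2 * n) (n + k)) sequentially"
    using eventually_ge_at_top[of k] by eventually_elim (simp add: qbinom_def)
  with lim[of k] show "(\<lambda>n. qbinom Q (2 * n) (n + k)) \<longlonglongrightarrow> 1 / qpoch_inf Q"
    by (rule Lim_transform_eventually)
  have "eventually (\<lambda>n. qpoch Q Q (2 * n) / (qpoch Q Q (n + Suc k) * qpoch Q Q (n - Suc k))
      = qbinom Q (2 * n) (n - Suc k)) sequentially"
    using eventually_ge_at_top[of "Suc k"]
    by eventually_elim (simp add: qbinom_def Suc_diff_le mult_2 algebra_simps)
  with lim[of "Suc k"] show "(\<lambda>n. qbinom Q (2 * n) (n - Suc k)) \<longlonglongrightarrow> 1 / qpoch_inf Q"
    by (rule Lim_transform_eventually)
qed

lemma qbinom_bounded: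
  assumes Q: "norm Q < 1"
  obtains B where "B \<ge> 0" "\<And>N j. norm (qbinom Q N j) \<le> B"
proof -
  obtain c where c: "c > 0" "\<And>n. c \<le> norm (qpoch Q Q n)"
    using qpoch_self_bounded_below[OF Q] by blast
  define E where "E = exp (norm Q / (1 - norm Q))"
  have E: "norm (qpoch Q Q n) \<le> E" for n
    unfolding E_def by (rule norm_qpoch_le[OF Q])
  have "norm (qbinom Q N j) \<le> E / (c * c)" for N j
  proof (cases "j \<le> N")
    case True
    then have "norm (qbinom Q N j) = norm (qpoch Q Q N) / (norm (qpoch Q Q j) * norm (qpoch Q Q (N - j)))"
      by (simp add: qbinom_def norm_divide norm_mult)
    also have "\<dots> \<le> E / (c * c)"
      by (intro frac_le mult_mono E) (use c in \<open>auto simp: E_def\<close>)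
    finally show ?thesis .
  qed (use c in \<open>simp add: E_def\<close>)
  then show ?thesis using that[of "E / (c * c)"] c by (simp add: E_def)
qed

lemma summable_power_triangular:
  fixes \<rho> c :: real
  assumes "0 \<le> \<rho>" "\<rho> < 1" "0 \<le> c"
  shows "summable (\<lambda>k. \<rho> ^ triangular (Suc k) * c ^ k)"
proof -
  have "(\<lambda>n. \<rho> ^ n * c) \<longlonglongrightarrow> 0"
    by (intro tendsto_mult_left_zero LIMSEQ_power_zero) (use assms in auto)
  then have "eventually (\<lambda>n. \<rho> ^ n * c < 1/2) sequentially"
    by (rule order_tendstoD) simp
  then obtain N where N: "\<And>n. n \<ge> N \<Longrightarrow> \<rho> ^ n * c < 1/2"
    unfolding eventually_sequentially by blast
  show ?thesis
  proof (rule summable_ratio_test[of "1/2" N])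
    fix n assume "N \<le> n"
    then have ratio: "\<rho> ^ Suc n * c \<le> 1/2" using N[of "Suc n"] by simp
    have "\<rho> ^ triangular (Suc (Suc n)) * c ^ Suc n = (\<rho> ^ Suc n * c) * (\<rho> ^ triangular (Suc n) * c ^ n)"
      by (simp add: power_add algebra_simps)
    also have "\<dots> \<le> 1/2 * (\<rho> ^ triangular (Suc n) * c ^ n)"
      by (rule mult_right_mono[OF ratio]) (use assms in simp)
    finally show "norm (\<rho> ^ triangular (Suc (Suc n)) * c ^ Suc n) \<le> 1/2 * norm (\<rho> ^ triangular (Suc n) * c ^ n)"
      using assms by simp
  qed simp
qed

lemma summable_triple_product_terms:
  fixes Q z :: complex
  assumes "norm Q < 1"
  shows "summable (\<lambda>k. norm (Q ^ triangular (Suc k) * z ^ k))"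
    and "summable (\<lambda>k. norm (Q ^ triangular (Suc k) * z ^ Suc k))"
  using summable_power_triangular[of "norm Q" "norm z"]
    summable_mult[OF summable_power_triangular[of "norm Q" "norm z"], of "norm z"] assms
  by (simp_all add: norm_mult norm_power algebra_simps)

lemma tendsto_suminf_weighted:
  fixes w :: "nat \<Rightarrow> nat \<Rightarrow> complex" and c :: "nat \<Rightarrow> complex"
  assumes lim: "\<And>k. (\<lambda>n. w k n) \<longlonglongrightarrow> L"
    and bound: "\<And>k n. norm (w k n) \<le> B"
    and c: "summable (\<lambda>k. norm (c k))"
  shows "(\<lambda>n. \<Sum>k. w k n * c k) \<longlonglongrightarrow> L * (\<Sum>k. c k)"
proof -
  have "(\<lambda>n. \<Sum>k. w k n * c k) \<longlonglongrightarrow> (\<Sum>k. L * c k)"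
  proof (rule tannerys_theorem[THEN conjunct2, THEN conjunct2])
    show "(\<lambda>n. w k n * c k) \<longlonglongrightarrow> L * c k" for k
      by (intro tendsto_mult lim tendsto_const)
    have "norm (w k n * c k) \<le> B * norm (c k)" for k n
      unfolding norm_mult by (intro mult_right_mono bound) simp
    then show "eventually (\<lambda>(k, n). norm (w k n * c k) \<le> B * norm (c k)) (at_top \<times>\<^sub>F sequentially)"
      by (intro always_eventually) auto
    show "summable (\<lambda>k. B * norm (c k))" by (intro summable_mult c)
  qed simp
  then show ?thesis by (simp add: suminf_mult summable_norm_cancel[OF c])
qed

lemma tendsto_prod_lessThan_prodinf:
  fixes f :: "nat \<Rightarrow> complex"
  assumes "summable (\<lambda>n. norm (f n))"
  shows "(\<lambda>n. \<Prod>i<n. 1 + f i) \<longlonglongrightarrow> (\<Prod>n. 1 + f n)"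
  using convergent_prod_LIMSEQ[OF convergent_prod_1_plus[OF assms]] LIMSEQ_lessThan_iff_atMost
  by blast

lemma triple_product_partial_tendsto:
  fixes Q z :: complex
  assumes Q: "norm Q < 1" "Q \<noteq> 0" and z: "z \<noteq> 0"
  shows "(\<lambda>n. (\<Prod>t<n. 1 + z * Q ^ Suc t) * (\<Prod>s<n. 1 + inverse z * Q ^ s))
    \<longlonglongrightarrow> 1 / qpoch_inf Q * (\<Sum>k. Q ^ triangular (Suc k) * z ^ k)
      + 1 / qpoch_inf Q * (\<Sum>k. Q ^ triangular (Suc k) * inverse z ^ Suc k)"
proof -
  obtain B where B: "B \<ge> 0" "\<And>N j. norm (qbinom Q N j) \<le> B" using qbinom_bounded[OF Q(1)] by blast
  define c where "c k = Q ^ triangular (Suc k) * z ^ k" for k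
  define c' where "c' k = Q ^ triangular (Suc k) * inverse z ^ Suc k" for k
  define w where "w k n = (if k \<le> n then qbinom Q (2 * n) (n + k) else 0)" for k n
  define w' where "w' k n = (if k < n then qbinom Q (2 * n) (n - Suc k) else 0)" for k n
  have c: "summable (\<lambda>k. norm (c k))" "summable (\<lambda>k. norm (c' k))"
    unfolding c_def c'_def using summable_triple_product_terms[OF Q(1)] by blast+
  have "(\<lambda>n. w k n) \<longlonglongrightarrow> 1 / qpoch_inf Q" for k
  proof -
    have "eventually (\<lambda>n. qbinom Q (2 * n) (n + k) = w k n) sequentially"
      using eventually_ge_at_top[of k] by eventually_elim (simp add: w_def)
    with qbinom_central_tendsto(1)[OF Q(1)] show ?thesis by (rule Lim_transform_eventually)
  qed
  then have lim: "(\<lambda>n. \<Sum>k. w k n * c k) \<longlonglongrightarrow> 1 / qpoch_inf Q * (\<Sum>k. c k)"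
    by (intro tendsto_suminf_weighted[where B = B] c) (use B in \<open>auto simp: w_def\<close>)
  have "(\<lambda>n. w' k n) \<longlonglongrightarrow> 1 / qpoch_inf Q" for k
  proof -
    have "eventually (\<lambda>n. qbinom Q (2 * n) (n - Suc k) = w' k n) sequentially"
      using eventually_gt_at_top[of k] by eventually_elim (simp add: w'_def)
    with qbinom_central_tendsto(2)[OF Q(1)] show ?thesis by (rule Lim_transform_eventually)
  qed
  then have lim': "(\<lambda>n. \<Sum>k. w' k n * c' k) \<longlonglongrightarrow> 1 / qpoch_inf Q * (\<Sum>k. c' k)"
    by (intro tendsto_suminf_weighted[where B = B] c) (use B in \<open>auto simp: w'_def\<close>)
  have partial: "(\<Prod>t<n. 1 + z * Q ^ Suc t) * (\<Prod>s<n. 1 + inverse z * Q ^ s)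
      = (\<Sum>k. w k n * c k) + (\<Sum>k. w' k n * c' k)" for n
  proof -
    have "(\<Sum>k. w k n * c k) = (\<Sum>k\<le>n. qbinom Q (2 * n) (n + k) * Q ^ triangular (Suc k) * z ^ k)"
      by (subst suminf_finite[of "{..n}"]) (auto simp: w_def c_def mult.assoc)
    moreover have "(\<Sum>k. w' k n * c' k)
        = (\<Sum>k<n. qbinom Q (2 * n) (n - Suc k) * Q ^ triangular (Suc k) * inverse z ^ Suc k)"
      by (subst suminf_finite[of "{..<n}"]) (auto simp: w'_def c'_def mult.assoc)
    ultimately show ?thesis by (simp only: triple_product_partial[OF Q z])
  qed
  show ?thesis
    unfolding partial using tendsto_add[OF lim lim'] by (simp add: c_def c'_def)
qed

theorem jacobi_triple_product:
  fixes Q z :: complex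
  assumes Q: "norm Q < 1" "Q \<noteq> 0" and z: "z \<noteq> 0"
  shows "qpoch_inf Q * ((\<Prod>t. 1 + z * Q ^ Suc t) * (\<Prod>s. 1 + inverse z * Q ^ s))
       = (\<Sum>k. Q ^ triangular (Suc k) * z ^ k) + (\<Sum>k. Q ^ triangular (Suc k) * inverse z ^ Suc k)"
proof -
  have "(\<lambda>n. (\<Prod>t<n. 1 + z * Q ^ Suc t) * (\<Prod>s<n. 1 + inverse z * Q ^ s))
      \<longlonglongrightarrow> (\<Prod>t. 1 + z * Q ^ Suc t) * (\<Prod>s. 1 + inverse z * Q ^ s)"
    using summable_triple_product_terms
    by (intro tendsto_mult tendsto_prod_lessThan_prodinf)
      (use Q summable_mult[OF summable_geometric[of "norm Q"]] in \<open>simp_all add: norm_mult norm_power\<close>)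
  with triple_product_partial_tendsto[OF Q z]
  have "(\<Prod>t. 1 + z * Q ^ Suc t) * (\<Prod>s. 1 + inverse z * Q ^ s)
      = 1 / qpoch_inf Q * (\<Sum>k. Q ^ triangular (Suc k) * z ^ k)
        + 1 / qpoch_inf Q * (\<Sum>k. Q ^ triangular (Suc k) * inverse z ^ Suc k)"
    using LIMSEQ_unique by blast
  then show ?thesis
    using qpoch_inf_nonzero[OF Q(1)] by (simp add: field_simps)
qed

section \<open>The theta quotient as an infinite product\<close>

lemma qpow_add: "qpow \<tau> x * qpow \<tau> y = qpow \<tau> (x + y)"
  unfolding qpow_def by (simp add: exp_add[symmetric] algebra_simps)

lemma qpow_nonzero: "qpow \<tau> x \<noteq> 0"
  unfolding qpow_def by simp

lemma qpow_1_power: "qpow \<tau> 1 ^ n = qpow \<tau> (real n)"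
  unfolding qpow_def by (simp add: exp_of_nat_mult[symmetric] algebra_simps)

lemma qpow_of_nat_mult: "qpow (of_nat d * \<tau>) c = qpow \<tau> (real d * c)"
  unfolding qpow_def by (simp add: algebra_simps)

lemma norm_qpow_less_1:
  assumes "Im \<tau> > 0" "x > 0"
  shows "norm (qpow \<tau> x) < 1"
proof -
  have "Re (2 * of_real pi * \<i> * of_real x * \<tau>) = - (2 * pi * x * Im \<tau>)"
    by simp
  moreover have "2 * pi * x * Im \<tau> > 0" using assms by simp
  ultimately show ?thesis unfolding qpow_def by simp
qed

lemma summable_norm_imp_infsum_nat:
  fixes f :: "nat \<Rightarrow> complex"
  assumes "summable (\<lambda>n. norm (f n))"
  shows "f summable_on UNIV" "infsum f UNIV = suminf f"
proof -
  show s: "f summable_on UNIV" by (rule norm_summable_imp_summable_on[OF assms])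
  have "f sums infsum f UNIV" by (rule has_sum_imp_sums[OF has_sum_infsum[OF s]])
  then show "infsum f UNIV = suminf f" by (simp add: sums_iff)
qed

lemma infsum_int_split_sign:
  fixes g :: "int \<Rightarrow> complex"
  assumes nonneg: "summable (\<lambda>k. norm (g (int k)))" and neg: "summable (\<lambda>k. norm (g (- int k - 1)))"
  shows "infsum g UNIV = (\<Sum>k. g (int k)) + (\<Sum>k. g (- int k - 1))"
proof -
  define h where "h k = - int k - 1" for k :: nat
  have inj: "inj (int :: nat \<Rightarrow> int)" "inj h" by (simp_all add: inj_on_def h_def)
  have U: "UNIV = range int \<union> range h"
  proof -
    have "m \<in> range int \<union> range h" for m :: int
    proof (cases "m \<ge> 0")
      case True
      then show ?thesis by (metis UnI1 nonneg_int_cases rangeI)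
    next
      case False
      then have "m = h (nat (- m - 1))" by (simp add: h_def)
      then show ?thesis by blast
    qed
    then show ?thesis by blast
  qed
  have sums: "g summable_on range int" "g summable_on range h"
    unfolding summable_on_reindex[OF inj(1)] summable_on_reindex[OF inj(2)] o_def
    using summable_norm_imp_infsum_nat(1)[OF nonneg] summable_norm_imp_infsum_nat(1)[of "\<lambda>k. g (h k)"] neg
    by (simp_all add: h_def)
  have "infsum g UNIV = infsum g (range int) + infsum g (range h)"
    unfolding U by (rule infsum_Un_disjoint[OF sums]) (auto simp: h_def)
  also have "\<dots> = (\<Sum>k. g (int k)) + (\<Sum>k. g (- int k - 1))"
    unfolding infsum_reindex[OF inj(1)] infsum_reindex[OF inj(2)] o_def
    using summable_norm_imp_infsum_nat(2)[OF nonneg] summable_norm_imp_infsum_nat(2)[of "\<lambda>k. g (h k)"] neg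
    by (simp add: h_def)
  finally show ?thesis .
qed

definition jtheta_summand :: "complex \<Rightarrow> complex \<Rightarrow> int \<Rightarrow> complex" where
  "jtheta_summand w \<tau> m = (let n = (of_int m + 1/2 :: complex) in
      exp (of_real pi * \<i> * n\<^sup>2 * \<tau> + 2 * of_real pi * \<i> * n * (w + 1/2)))"

lemma jtheta_eq_infsum_summand: "jtheta w \<tau> = infsum (jtheta_summand w \<tau>) UNIV"
  unfolding jtheta_def jtheta_summand_def ..

lemma jtheta_summand_eq:
  "jtheta_summand (1/2 + of_nat r * \<tau>) (of_nat d * \<tau>) m
    = - qpow \<tau> (real d / 8 + real r / 2)
       * (exp (2 * of_real pi * \<i> * of_nat d * \<tau> * (of_int m * (of_int m + 1) / 2))
          * exp (2 * of_real pi * \<i> * of_nat r * \<tau> * of_int m))"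
proof -
  have "of_real pi * \<i> * (of_int m + 1/2)\<^sup>2 * (of_nat d * \<tau>)
        + 2 * of_real pi * \<i> * (of_int m + 1/2) * ((1/2 + of_nat r * \<tau>) + 1/2)
    = ((2 * of_int m + 1) * of_real pi) * \<i> + (2 * of_real pi * \<i> * of_real (real d / 8 + real r / 2) * \<tau>
       + (2 * of_real pi * \<i> * of_nat d * \<tau> * (of_int m * (of_int m + 1) / 2)
          + 2 * of_real pi * \<i> * of_nat r * \<tau> * of_int m))"
    by (simp add: field_simps power2_eq_square)
  moreover have "exp (((2 * of_int m + 1) * of_real pi) * \<i>) = -1"
    using exp_integer_2pi_plus1[of "of_int m"] by simp
  ultimately have "exp (of_real pi * \<i> * (of_int m + 1/2)\<^sup>2 * (of_nat d * \<tau>)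
        + 2 * of_real pi * \<i> * (of_int m + 1/2) * ((1/2 + of_nat r * \<tau>) + 1/2))
    = - qpow \<tau> (real d / 8 + real r / 2)
       * (exp (2 * of_real pi * \<i> * of_nat d * \<tau> * (of_int m * (of_int m + 1) / 2))
          * exp (2 * of_real pi * \<i> * of_nat r * \<tau> * of_int m))"
    by (simp add: exp_add qpow_def)
  then show ?thesis by (simp only: jtheta_summand_def Let_def)
qed

lemma exp_mult_triangular:
  fixes w :: complex
  assumes "m = int k \<or> m = - int k - 1"
  shows "exp (w * (of_int m * (of_int m + 1) / 2)) = exp w ^ triangular (Suc k)"
proof -
  have "of_int m * (of_int m + 1) / 2 = (of_nat (triangular (Suc k)) :: complex)"
    using assms by (elim disjE; hypsubst; simp add: of_nat_triangular field_simps)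
  then show ?thesis by (simp only: mult.commute[of w] exp_of_nat_mult)
qed

lemma jtheta_summand_triangular:
  fixes d r :: nat and \<tau> :: complex
  defines "Q \<equiv> qpow \<tau> 1 ^ d" and "a \<equiv> qpow \<tau> 1 ^ r" and "c \<equiv> qpow \<tau> (real d / 8 + real r / 2)"
  shows "jtheta_summand (1/2 + of_nat r * \<tau>) (of_nat d * \<tau>) (int k) = - c * (Q ^ triangular (Suc k) * a ^ k)"
    and "jtheta_summand (1/2 + of_nat r * \<tau>) (of_nat d * \<tau>) (- int k - 1)
      = - c * (Q ^ triangular (Suc k) * inverse a ^ Suc k)"
proof -
  have Q_exp: "exp (2 * of_real pi * \<i> * of_nat d * \<tau>) = Q"
    unfolding Q_def qpow_1_power by (simp add: qpow_def)
  have a_exp: "exp (2 * of_real pi * \<i> * of_nat r * \<tau>) = a"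
    unfolding a_def qpow_1_power by (simp add: qpow_def)
  have Q_tri: "exp (2 * of_real pi * \<i> * of_nat d * \<tau> * (of_int m * (of_int m + 1) / 2))
      = Q ^ triangular (Suc k)" if "m = int k \<or> m = - int k - 1" for m
    using exp_mult_triangular[OF that, of "2 * of_real pi * \<i> * of_nat d * \<tau>"] by (simp only: Q_exp)
  have "2 * of_real pi * \<i> * of_nat r * \<tau> * of_int (int k) = of_nat k * (2 * of_real pi * \<i> * of_nat r * \<tau>)"
    by simp
  then have "exp (2 * of_real pi * \<i> * of_nat r * \<tau> * of_int (int k)) = a ^ k"
    by (simp only: exp_of_nat_mult a_exp)
  then show "jtheta_summand (1/2 + of_nat r * \<tau>) (of_nat d * \<tau>) (int k) = - c * (Q ^ triangular (Suc k) * a ^ k)"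
    unfolding jtheta_summand_eq c_def Q_tri[OF disjI1[OF refl]] by simp
  have "2 * of_real pi * \<i> * of_nat r * \<tau> * of_int (- int k - 1)
      = of_nat (Suc k) * (- (2 * of_real pi * \<i> * of_nat r * \<tau>))"
    by (simp add: algebra_simps)
  then have "exp (2 * of_real pi * \<i> * of_nat r * \<tau> * of_int (- int k - 1)) = inverse a ^ Suc k"
    by (simp only: exp_of_nat_mult exp_minus a_exp)
  then show "jtheta_summand (1/2 + of_nat r * \<tau>) (of_nat d * \<tau>) (- int k - 1)
      = - c * (Q ^ triangular (Suc k) * inverse a ^ Suc k)"
    unfolding jtheta_summand_eq c_def Q_tri[OF disjI2[OF refl]] by simp
qed

lemma jtheta_eq_triple_product:
  fixes d r :: nat and \<tau> :: complex
  defines "Q \<equiv> qpow \<tau> 1 ^ d" and "a \<equiv> qpow \<tau> 1 ^ r" and "c \<equiv> qpow \<tau> (real d / 8 + real r / 2)"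
  assumes "Im \<tau> > 0" and "0 < r" and "0 < d"
  shows "jtheta (1/2 + of_nat r * \<tau>) (of_nat d * \<tau>)
    = - c * (qpoch_inf Q * ((\<Prod>t. 1 + a * Q ^ Suc t) * (\<Prod>s. 1 + inverse a * Q ^ s)))"
proof -
  have norm_q: "norm (qpow \<tau> 1) < 1" by (rule norm_qpow_less_1) (use assms in auto)
  have Q: "norm Q < 1" "Q \<noteq> 0" and a: "a \<noteq> 0"
    using norm_power_less_one[OF norm_q] assms by (auto simp: Q_def a_def qpow_nonzero)
  note summand = jtheta_summand_triangular[where \<tau> = \<tau> and d = d and r = r, folded Q_def a_def c_def]
  have s: "summable (\<lambda>k. norm (Q ^ triangular (Suc k) * a ^ k))"
    "summable (\<lambda>k. norm (Q ^ triangular (Suc k) * inverse a ^ Suc k))"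
    using summable_triple_product_terms[OF Q(1)] by blast+
  have "jtheta (1/2 + of_nat r * \<tau>) (of_nat d * \<tau>)
      = (\<Sum>k. - c * (Q ^ triangular (Suc k) * a ^ k)) + (\<Sum>k. - c * (Q ^ triangular (Suc k) * inverse a ^ Suc k))"
    unfolding jtheta_eq_infsum_summand summand[symmetric]
    by (rule infsum_int_split_sign)
      (use summable_mult[OF s(1), of "norm c"] summable_mult[OF s(2), of "norm c"]
        in \<open>simp_all add: summand norm_mult\<close>)
  also have "\<dots> = - c * ((\<Sum>k. Q ^ triangular (Suc k) * a ^ k)
      + (\<Sum>k. Q ^ triangular (Suc k) * inverse a ^ Suc k))"
    unfolding suminf_mult[OF summable_norm_cancel[OF s(1)]] suminf_mult[OF summable_norm_cancel[OF s(2)]]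
    by (simp add: algebra_simps)
  also have "(\<Sum>k. Q ^ triangular (Suc k) * a ^ k) + (\<Sum>k. Q ^ triangular (Suc k) * inverse a ^ Suc k)
      = qpoch_inf Q * ((\<Prod>t. 1 + a * Q ^ Suc t) * (\<Prod>s. 1 + inverse a * Q ^ s))"
    by (rule jacobi_triple_product[OF Q a, symmetric])
  finally show ?thesis .
qed

definition twin_prod :: "complex \<Rightarrow> complex \<Rightarrow> complex \<Rightarrow> complex \<Rightarrow> complex" where
  "twin_prod a b Q y = (\<Prod>k. (1 + a * y * Q ^ k) * (1 + b * y * Q ^ k))"

lemma triple_product_eq_twin_prod:
  fixes a b Q :: complex
  assumes Q: "norm Q < 1" and a: "norm a < 1" "a \<noteq> 0" and ab: "a * b = Q"
  shows "a * ((\<Prod>t. 1 + a * Q ^ Suc t) * (\<Prod>s. 1 + inverse a * Q ^ s)) = twin_prod a b Q 1"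
proof -
  have "summable (\<lambda>k. norm (c * Q ^ k))" for c
    using summable_mult[OF summable_geometric[of "norm Q"], of "norm c"] Q by (simp add: norm_mult norm_power)
  then have conv: "convergent_prod (\<lambda>k. 1 + c * Q ^ k)" for c
    by (rule convergent_prod_1_plus)
  have a1: "1 + a \<noteq> 0" using a by (auto simp: add_eq_0_iff)
  have a2: "1 + inverse a \<noteq> 0"
    using a a1 by (simp add: field_simps)
  have head_a: "(\<Prod>t. 1 + a * Q ^ Suc t) = (\<Prod>k. 1 + a * Q ^ k) / (1 + a)"
    using prodinf_split_head[OF conv[of a]] a1 by simp
  have "(\<Prod>t. 1 + inverse a * Q ^ Suc t) = (\<Prod>k. 1 + inverse a * Q ^ k) / (1 + inverse a)"
    using prodinf_split_head[OF conv[of "inverse a"]] a2 by simp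
  moreover have "(\<lambda>t. 1 + inverse a * Q ^ Suc t) = (\<lambda>t. 1 + b * Q ^ t)"
    using a ab by (auto simp: field_simps)
  ultimately have head_inv: "(\<Prod>s. 1 + inverse a * Q ^ s) = (1 + inverse a) * (\<Prod>k. 1 + b * Q ^ k)"
    using a2 by simp
  have "a * ((\<Prod>t. 1 + a * Q ^ Suc t) * (\<Prod>s. 1 + inverse a * Q ^ s))
      = (\<Prod>k. 1 + a * Q ^ k) * (\<Prod>k. 1 + b * Q ^ k)"
  proof -
    have "a + a * a \<noteq> 0" using a(2) a1 by (metis distrib_left mult_eq_0_iff mult.right_neutral)
    then show ?thesis unfolding head_a head_inv using a(2) a1 by (simp add: field_simps)
  qed
  also have "\<dots> = twin_prod a b Q 1"
    unfolding twin_prod_def by (simp add: prodinf_mult[OF conv conv])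
  finally show ?thesis .
qed

theorem theta_quotient_eq_twin_prod:
  fixes d r :: nat and \<tau> :: complex
  assumes "Im \<tau> > 0" and "1 \<le> r" and "r < d"
  shows "- qpow \<tau> (- real d / 12 + real r / 2)
      * jtheta (1/2 + of_nat r * \<tau>) (of_nat d * \<tau>) / dedekind_eta (of_nat d * \<tau>)
    = twin_prod (qpow \<tau> 1 ^ r) (qpow \<tau> 1 ^ (d - r)) (qpow \<tau> 1 ^ d) 1"
proof -
  define q where "q = qpow \<tau> 1"
  define Q where "Q = q ^ d"
  define a where "a = q ^ r"
  have norm_q: "norm q < 1" unfolding q_def by (rule norm_qpow_less_1) (use assms in auto)
  have Q: "norm Q < 1" and a: "norm a < 1" "a \<noteq> 0"
    using norm_power_less_one[OF norm_q] assms by (auto simp: Q_def a_def q_def qpow_nonzero)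
  have ab: "a * q ^ (d - r) = Q"
    unfolding a_def Q_def using assms by (simp add: power_add[symmetric])
  have eta: "dedekind_eta (of_nat d * \<tau>) = qpow \<tau> (real d / 24) * qpoch_inf Q"
    unfolding dedekind_eta_def qpoch_inf_def qpow_of_nat_mult Q_def q_def qpow_1_power by simp
  have "qpow \<tau> (- real d / 12 + real r / 2) * qpow \<tau> (real d / 8 + real r / 2)
      = qpow \<tau> (real r + real d / 24)"
    unfolding qpow_add by (rule arg_cong[where f = "qpow \<tau>"]) (simp add: field_simps)
  also have "\<dots> = a * qpow \<tau> (real d / 24)"
    unfolding a_def q_def qpow_1_power qpow_add ..
  finally have prefactor: "qpow \<tau> (- real d / 12 + real r / 2) * qpow \<tau> (real d / 8 + real r / 2)
      = a * qpow \<tau> (real d / 24)" .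
  define T where "T = (\<Prod>t. 1 + a * Q ^ Suc t) * (\<Prod>s. 1 + inverse a * Q ^ s)"
  have theta: "jtheta (1/2 + of_nat r * \<tau>) (of_nat d * \<tau>) = - qpow \<tau> (real d / 8 + real r / 2) * (qpoch_inf Q * T)"
    using jtheta_eq_triple_product[where \<tau> = \<tau> and r = r and d = d] assms unfolding T_def Q_def a_def q_def by simp
  have "- qpow \<tau> (- real d / 12 + real r / 2)
      * jtheta (1/2 + of_nat r * \<tau>) (of_nat d * \<tau>) / dedekind_eta (of_nat d * \<tau>)
    = (a * qpow \<tau> (real d / 24)) * (qpoch_inf Q * T) / (qpow \<tau> (real d / 24) * qpoch_inf Q)"
    unfolding theta eta prefactor[symmetric] by (simp add: algebra_simps)
  also have "\<dots> = a * T"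
    using qpoch_inf_nonzero[OF Q] qpow_nonzero[of \<tau> "real d / 24"] by (simp add: field_simps)
  also have "\<dots> = twin_prod a (q ^ (d - r)) Q 1"
    unfolding T_def by (rule triple_product_eq_twin_prod[OF Q a ab])
  finally show ?thesis by (simp add: a_def Q_def q_def)
qed

section \<open>A two-variable series satisfying the recurrence\<close>

locale twin_params =
  fixes a b Q :: complex
  assumes Q: "norm Q < 1" and a: "norm a < 1" and b: "norm b < 1" and ab: "a * b = Q"
begin

abbreviation P :: "complex \<Rightarrow> complex" where
  "P y \<equiv> twin_prod a b Q y"

abbreviation ab_norm :: real where
  "ab_norm \<equiv> norm a + norm b + norm a * norm b"

lemma norm_mult_power_le_1:
  assumes "norm x \<le> 1"
  shows "norm (x * Q ^ n) \<le> 1"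
  using assms Q by (simp add: norm_mult norm_power mult_le_one power_le_one)

lemma norm_twin_factor_minus_1_le:
  assumes y: "norm y \<le> 1"
  shows "norm ((1 + a * y * Q ^ k) * (1 + b * y * Q ^ k) - 1) \<le> norm y * ab_norm * norm Q ^ k"
proof -
  define t where "t = norm y * norm Q ^ k"
  have t: "0 \<le> t" "t \<le> 1"
    using norm_mult_power_le_1[OF y, of k] by (simp_all add: t_def norm_mult norm_power)
  have "(1 + a * y * Q ^ k) * (1 + b * y * Q ^ k) - 1
      = (a * y * Q ^ k + b * y * Q ^ k) + (a * y * Q ^ k) * (b * y * Q ^ k)"
    by (simp add: algebra_simps)
  then have "norm ((1 + a * y * Q ^ k) * (1 + b * y * Q ^ k) - 1)
      \<le> norm (a * y * Q ^ k + b * y * Q ^ k) + norm ((a * y * Q ^ k) * (b * y * Q ^ k))"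
    by (simp only: norm_triangle_ineq)
  also have "\<dots> \<le> norm (a * y * Q ^ k) + norm (b * y * Q ^ k) + norm (a * y * Q ^ k) * norm (b * y * Q ^ k)"
    unfolding norm_mult[of "a * y * Q ^ k"] by (intro add_right_mono norm_triangle_ineq)
  also have "\<dots> = norm a * t + norm b * t + (norm a * t) * (norm b * t)"
    by (simp add: t_def norm_mult norm_power algebra_simps)
  also have "(norm a * t) * (norm b * t) \<le> (norm a * t) * norm b"
    by (intro mult_left_mono) (use t in \<open>auto intro: mult_left_le\<close>)
  finally show ?thesis by (simp add: t_def algebra_simps)
qed

lemma summable_twin_factor:
  assumes y: "norm y \<le> 1"
  shows "summable (\<lambda>k. norm ((1 + a * y * Q ^ k) * (1 + b * y * Q ^ k) - 1))"
    and "(\<Sum>k. norm ((1 + a * y * Q ^ k) * (1 + b * y * Q ^ k) - 1)) \<le> norm y * ab_norm / (1 - norm Q)"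
proof -
  have geom: "summable (\<lambda>k. norm y * ab_norm * norm Q ^ k)"
    by (intro summable_mult summable_geometric) (use Q in auto)
  show s: "summable (\<lambda>k. norm ((1 + a * y * Q ^ k) * (1 + b * y * Q ^ k) - 1))"
    by (rule summable_comparison_test'[OF geom]) (use norm_twin_factor_minus_1_le[OF y] in auto)
  have "(\<Sum>k. norm ((1 + a * y * Q ^ k) * (1 + b * y * Q ^ k) - 1)) \<le> (\<Sum>k. norm y * ab_norm * norm Q ^ k)"
    by (rule suminf_le[OF _ s geom]) (rule norm_twin_factor_minus_1_le[OF y])
  also have "\<dots> = norm y * ab_norm / (1 - norm Q)"
    using suminf_geometric[of "norm Q"] Q by (simp add: suminf_mult)
  finally show "(\<Sum>k. norm ((1 + a * y * Q ^ k) * (1 + b * y * Q ^ k) - 1)) \<le> norm y * ab_norm / (1 - norm Q)" .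
qed

lemma convergent_prod_P:
  assumes "norm y \<le> 1"
  shows "convergent_prod (\<lambda>k. (1 + a * y * Q ^ k) * (1 + b * y * Q ^ k))"
  using convergent_prod_1_plus[OF summable_twin_factor(1)[OF assms]] by simp

lemma norm_P_minus_1_le:
  assumes y: "norm y \<le> 1"
  shows "norm (P y - 1) \<le> exp (norm y * ab_norm / (1 - norm Q)) - 1"
proof -
  have "norm (P y - 1) \<le> exp (\<Sum>k. norm ((1 + a * y * Q ^ k) * (1 + b * y * Q ^ k) - 1)) - 1"
    using norm_prodinf_1_plus_minus_1_le[OF summable_twin_factor(1)[OF y]] by (simp add: twin_prod_def)
  also have "\<dots> \<le> exp (norm y * ab_norm / (1 - norm Q)) - 1"
    using summable_twin_factor(2)[OF y] by simp
  finally show ?thesis .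
qed

lemma norm_P_le:
  assumes y: "norm y \<le> 1"
  shows "norm (P y) \<le> exp (ab_norm / (1 - norm Q))"
proof -
  have "norm (P y) \<le> norm (P y - 1) + 1"
    by (metis add.commute diff_add_cancel norm_one norm_triangle_ineq)
  also have "\<dots> \<le> exp (norm y * ab_norm / (1 - norm Q))"
    using norm_P_minus_1_le[OF y] by simp
  also have "\<dots> \<le> exp (ab_norm / (1 - norm Q))"
    using y Q by (auto intro!: divide_right_mono mult_left_le_one_le)
  finally show ?thesis .
qed

lemma twin_factor_nonzero:
  assumes y: "norm y \<le> 1"
  shows "(1 + a * y) * (1 + b * y) \<noteq> 0"
proof -
  have "1 + c * y \<noteq> 0" if "norm c < 1" for c
  proof
    assume "1 + c * y = 0"
    then have "norm (c * y) = 1" by (simp add: add_eq_0_iff)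
    moreover have "norm (c * y) \<le> norm c" using y by (simp add: norm_mult mult_left_le)
    ultimately show False using that by simp
  qed
  then show ?thesis using a b by simp
qed

lemma P_shift:
  assumes y: "norm y \<le> 1"
  shows "P y = (1 + a * y) * (1 + b * y) * P (y * Q)"
proof -
  have "(\<Prod>n. (1 + a * y * Q ^ Suc n) * (1 + b * y * Q ^ Suc n)) = P y / ((1 + a * y) * (1 + b * y))"
    using prodinf_split_head[OF convergent_prod_P[OF y]] twin_factor_nonzero[OF y]
    by (simp add: twin_prod_def)
  moreover have "(\<Prod>n. (1 + a * y * Q ^ Suc n) * (1 + b * y * Q ^ Suc n)) = P (y * Q)"
    unfolding twin_prod_def by (simp add: algebra_simps)
  ultimately show ?thesis using twin_factor_nonzero[OF y] by (simp add: field_simps)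
qed

lemma P_shift_power:
  assumes "norm x \<le> 1"
  shows "P (x * Q ^ n) = (1 + a * x * Q ^ n) * (1 + b * x * Q ^ n) * P (x * Q ^ Suc n)"
  using P_shift[OF norm_mult_power_le_1[OF assms, of n]] by (simp add: algebra_simps)

definition Kcoeff :: "complex \<Rightarrow> nat \<Rightarrow> complex" where
  "Kcoeff x n = x ^ n * Q ^ (n * n) * qpoch x Q n / qpoch Q Q n"

definition K :: "complex \<Rightarrow> complex" where
  "K x = (\<Sum>n. Kcoeff x n * P (x * Q ^ n))"

text \<open>\<open>Kcorr\<close> supplies the correction terms that make the functional equation of \<open>K\<close>
  telescope termwise.\<close>

definition Kcorr :: "complex \<Rightarrow> nat \<Rightarrow> complex" where
  "Kcorr x n = (if n = 0 then 0 else x ^ (n + 1) * Q ^ (n * n) * qpoch (x * Q) Q (n - 1) / qpoch Q Q (n - 1))"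

lemma Kcoeff_Kcorr_bounded:
  obtains C where "C \<ge> 0"
    "\<And>x n. norm x \<le> 1 \<Longrightarrow> norm (Kcoeff x n) \<le> C * norm x ^ n * norm Q ^ (n * n)"
    "\<And>x n. norm x \<le> 1 \<Longrightarrow> norm (Kcorr x n) \<le> C * norm Q ^ (n * n)"
proof -
  obtain c where c: "c > 0" "\<And>n. c \<le> norm (qpoch Q Q n)"
    using qpoch_self_bounded_below[OF Q] by blast
  define E where "E = exp (1 / (1 - norm Q))"
  have E: "norm (qpoch y Q n) \<le> E" if "norm y \<le> 1" for y n
  proof -
    have "norm y / (1 - norm Q) \<le> 1 / (1 - norm Q)" using that Q by (intro divide_right_mono) auto
    then show ?thesis
      using norm_qpoch_le[OF Q, of y n] unfolding E_def by (meson exp_le_cancel_iff order.trans)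
  qed
  have ratio: "norm (qpoch y Q n) / norm (qpoch Q Q n) \<le> E / c" if "norm y \<le> 1" for y n
    by (intro frac_le E that c) (use c in \<open>auto simp: E_def\<close>)
  have "norm (Kcoeff x n) \<le> E / c * norm x ^ n * norm Q ^ (n * n)" if "norm x \<le> 1" for x n
  proof -
    have "norm (Kcoeff x n) = norm x ^ n * norm Q ^ (n * n) * (norm (qpoch x Q n) / norm (qpoch Q Q n))"
      by (simp add: Kcoeff_def norm_mult norm_divide norm_power)
    also have "\<dots> \<le> norm x ^ n * norm Q ^ (n * n) * (E / c)"
      by (intro mult_left_mono ratio that) auto
    finally show ?thesis by (simp add: algebra_simps)
  qed
  moreover have "norm (Kcorr x n) \<le> E / c * norm Q ^ (n * n)" if x: "norm x \<le> 1" for x n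
  proof (cases n)
    case (Suc m)
    have "norm (Kcorr x n) = norm x ^ (n + 1) * norm Q ^ (n * n) * (norm (qpoch (x * Q) Q m) / norm (qpoch Q Q m))"
      using Suc by (simp add: Kcorr_def norm_mult norm_divide norm_power)
    also have "\<dots> \<le> 1 * norm Q ^ (n * n) * (E / c)"
    proof (rule mult_mono)
      show "norm x ^ (n + 1) * norm Q ^ (n * n) \<le> 1 * norm Q ^ (n * n)"
        using x by (intro mult_right_mono power_le_one) auto
      show "norm (qpoch (x * Q) Q m) / norm (qpoch Q Q m) \<le> E / c"
        using ratio norm_mult_power_le_1[OF x, of 1] by simp
    qed (use c in \<open>auto simp: E_def\<close>)
    finally show ?thesis by (simp add: algebra_simps)
  qed (use c in \<open>simp add: Kcorr_def E_def\<close>)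
  ultimately show ?thesis using that[of "E / c"] c by (simp add: E_def)
qed

lemma K_terms_bounded:
  obtains C where "C \<ge> 0"
    "\<And>x n. norm x \<le> 1 \<Longrightarrow> norm (Kcoeff x n * P (x * Q ^ n)) \<le> C * norm x ^ n * norm Q ^ n"
    "\<And>x n. norm x \<le> 1 \<Longrightarrow> norm (Kcorr x n * P (x * Q ^ n)) \<le> C * norm Q ^ n"
proof -
  obtain C where C: "C \<ge> 0"
    "\<And>x n. norm x \<le> 1 \<Longrightarrow> norm (Kcoeff x n) \<le> C * norm x ^ n * norm Q ^ (n * n)"
    "\<And>x n. norm x \<le> 1 \<Longrightarrow> norm (Kcorr x n) \<le> C * norm Q ^ (n * n)"
    by (rule Kcoeff_Kcorr_bounded) blast
  define B where "B = exp (ab_norm / (1 - norm Q))"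
  have P: "norm (P (x * Q ^ n)) \<le> B" if "norm x \<le> 1" for x n
    unfolding B_def by (rule norm_P_le[OF norm_mult_power_le_1[OF that]])
  have square: "norm Q ^ (n * n) \<le> norm Q ^ n" for n
    by (intro power_decreasing) (use Q in \<open>auto simp: le_square\<close>)
  have "norm (Kcoeff x n * P (x * Q ^ n)) \<le> (C * B) * norm x ^ n * norm Q ^ n" if x: "norm x \<le> 1" for x n
  proof -
    have "norm (Kcoeff x n) \<le> C * norm x ^ n * norm Q ^ n"
      using C(2)[OF x, of n] mult_left_mono[OF square[of n], of "C * norm x ^ n"] C(1)
      by (simp add: algebra_simps)
    then have "norm (Kcoeff x n) * norm (P (x * Q ^ n)) \<le> (C * norm x ^ n * norm Q ^ n) * B"
      by (rule mult_mono[OF _ P[OF x]]) (use C(1) in auto)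
    then show ?thesis by (simp add: norm_mult algebra_simps)
  qed
  moreover have "norm (Kcorr x n * P (x * Q ^ n)) \<le> (C * B) * norm Q ^ n" if x: "norm x \<le> 1" for x n
  proof -
    have "norm (Kcorr x n) \<le> C * norm Q ^ n"
      using C(3)[OF x, of n] mult_left_mono[OF square[of n] C(1)] by simp
    then have "norm (Kcorr x n) * norm (P (x * Q ^ n)) \<le> (C * norm Q ^ n) * B"
      by (rule mult_mono[OF _ P[OF x]]) (use C(1) in auto)
    then show ?thesis by (simp add: norm_mult algebra_simps)
  qed
  moreover have "C * B \<ge> 0" using C(1) by (simp add: B_def)
  ultimately show ?thesis using that by blast
qed

lemma K_sums:
  assumes x: "norm x \<le> 1"
  shows "(\<lambda>n. Kcoeff x n * P (x * Q ^ n)) sums K x"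
proof -
  obtain C where C: "C \<ge> 0"
    "\<And>x n. norm x \<le> 1 \<Longrightarrow> norm (Kcoeff x n * P (x * Q ^ n)) \<le> C * norm x ^ n * norm Q ^ n"
    "\<And>x n. norm x \<le> 1 \<Longrightarrow> norm (Kcorr x n * P (x * Q ^ n)) \<le> C * norm Q ^ n"
    by (rule K_terms_bounded) blast
  have geom: "summable (\<lambda>n. C * norm Q ^ n)"
    by (intro summable_mult summable_geometric) (use Q in auto)
  have bound: "norm (Kcoeff x n * P (x * Q ^ n)) \<le> C * norm Q ^ n" for n
  proof -
    have "C * norm x ^ n \<le> C"
      by (rule mult_left_le[OF power_le_one C(1)]) (use x in auto)
    then show ?thesis
      using C(2)[OF x, of n] mult_right_mono[of "C * norm x ^ n" C "norm Q ^ n"] by simp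
  qed
  have "summable (\<lambda>n. norm (Kcoeff x n * P (x * Q ^ n)))"
    by (rule summable_comparison_test'[OF geom]) (simp add: bound)
  then show ?thesis unfolding K_def by (rule summable_sums[OF summable_norm_cancel])
qed


lemma Kcoeff_Kcorr_Suc_closed_forms:
  fixes m :: nat and x :: complex
  assumes x: "norm x \<le> 1"
  defines "w \<equiv> Q ^ m"
    and "F \<equiv> x ^ m * Q ^ (m * m) * qpoch (x * Q) Q m / (qpoch Q Q m * (1 - Q ^ Suc m))"
  shows "Kcoeff x (Suc m) = F * (x * w * w * Q * (1 - x))"
    and "Kcoeff (x * Q) (Suc m) = F * (x * Q * w * w * w * Q * (1 - x * Q * w))"
    and "x * Q * (1 - x * Q) * Kcoeff (x * Q * Q) m = F * (x * Q * w * w * (1 - x * Q * w) * (1 - Q * w))"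
    and "Kcorr x (Suc (Suc m)) = F * (x ^ 3 * w ^ 4 * Q ^ 4 * (1 - x * Q * w))"
    and "Kcorr x (Suc m) = F * (x\<^sup>2 * w * w * Q * (1 - Q * w))"
proof -
  define p where "p = qpoch (x * Q) Q m"
  define D where "D = qpoch Q Q m"
  have D: "D \<noteq> 0" unfolding D_def by (rule qpoch_self_nonzero[OF Q])
  have w: "1 - Q * w \<noteq> 0"
    using qpoch_self_nonzero[OF Q, of "Suc m"] by (simp add: w_def qpoch_Suc)
  have "norm (x * Q) < 1"
    using mult_left_le_one_le[of "norm Q" "norm x"] x Q by (simp add: norm_mult)
  then have xQ: "1 - x * Q \<noteq> 0" by auto
  have h1: "qpoch x Q (Suc m) = (1 - x) * p" by (simp add: p_def qpoch_Suc_left)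
  have h2: "qpoch (x * Q) Q (Suc m) = p * (1 - x * Q * w)" by (simp add: p_def w_def qpoch_Suc)
  have h3: "qpoch (x * Q * Q) Q m = p * (1 - x * Q * w) / (1 - x * Q)"
  proof -
    have "(1 - x * Q) * qpoch (x * Q * Q) Q m = p * (1 - x * Q * w)"
      using qpoch_Suc_left[of "x * Q" Q m] h2 by simp
    then show ?thesis using nonzero_eq_divide_eq[OF xQ] by (simp add: mult.commute)
  qed
  have h4: "qpoch Q Q (Suc m) = D * (1 - Q * w)" by (simp add: D_def w_def qpoch_Suc)
  have "Suc m * Suc m = m * m + m + m + 1" by simp
  then have e1: "Q ^ (Suc m * Suc m) = Q ^ (m * m) * w * w * Q"
    by (simp add: w_def power_add)
  have "Suc (Suc m) * Suc (Suc m) = m * m + m + m + m + m + 4" by simp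
  then have e2: "Q ^ (Suc (Suc m) * Suc (Suc m)) = Q ^ (m * m) * w ^ 4 * Q ^ 4"
    by (simp add: w_def power_add power4_eq_xxxx)
  have F: "F = x ^ m * Q ^ (m * m) * p / (D * (1 - Q * w))"
    by (simp add: F_def p_def D_def w_def)
  show "Kcoeff x (Suc m) = F * (x * w * w * Q * (1 - x))"
    unfolding Kcoeff_def h1 h4 e1 F using D w by (simp add: field_simps)
  show "Kcoeff (x * Q) (Suc m) = F * (x * Q * w * w * w * Q * (1 - x * Q * w))"
    unfolding Kcoeff_def h2 h4 e1 F using D w by (simp add: w_def power_mult_distrib field_simps)
  show "x * Q * (1 - x * Q) * Kcoeff (x * Q * Q) m = F * (x * Q * w * w * (1 - x * Q * w) * (1 - Q * w))"
    unfolding Kcoeff_def h3 F D_def[symmetric] using D w xQ by (simp add: w_def power_mult_distrib field_simps)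
  have "Kcorr x (Suc (Suc m)) = x ^ m * x ^ 3 * Q ^ (Suc (Suc m) * Suc (Suc m))
      * qpoch (x * Q) Q (Suc m) / qpoch Q Q (Suc m)"
    by (simp add: Kcorr_def power3_eq_cube)
  then show "Kcorr x (Suc (Suc m)) = F * (x ^ 3 * w ^ 4 * Q ^ 4 * (1 - x * Q * w))"
    unfolding e2 h2 h4 F using D w by (simp add: field_simps)
  have "Kcorr x (Suc m) = x ^ m * x\<^sup>2 * Q ^ (Suc m * Suc m) * p / D"
    by (simp add: Kcorr_def p_def D_def power2_eq_square)
  then show "Kcorr x (Suc m) = F * (x\<^sup>2 * w * w * Q * (1 - Q * w))"
    unfolding e1 F using D w by (simp add: field_simps)
qed


lemma Kcoeff_step:
  fixes m :: nat and x :: complex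
  assumes x: "norm x \<le> 1"
  defines "E \<equiv> (1 + a * x * Q ^ Suc m) * (1 + b * x * Q ^ Suc m)"
  shows "Kcoeff x (Suc m) * E - (1 + (a + b) * x) * Kcoeff (x * Q) (Suc m)
      - x * Q * (1 - x * Q) * Kcoeff (x * Q * Q) m
    = Kcorr x (Suc (Suc m)) - Kcorr x (Suc m) * E"
proof -
  define w where "w = Q ^ m"
  define s where "s = a + b"
  have "E = 1 + s * x * Q * w + (a * b) * x\<^sup>2 * Q\<^sup>2 * w\<^sup>2"
    by (simp add: E_def s_def w_def algebra_simps power2_eq_square)
  then have E: "E = 1 + s * x * Q * w + Q * x\<^sup>2 * Q\<^sup>2 * w\<^sup>2"
    by (simp only: ab)
  define F where "F = x ^ m * Q ^ (m * m) * qpoch (x * Q) Q m / (qpoch Q Q m * (1 - Q ^ Suc m))"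
  note closed = Kcoeff_Kcorr_Suc_closed_forms[OF x, of m, folded F_def w_def]
  have "Kcoeff x (Suc m) * E - (1 + (a + b) * x) * Kcoeff (x * Q) (Suc m)
      - x * Q * (1 - x * Q) * Kcoeff (x * Q * Q) m
    = F * (x * w * w * Q * (1 - x) * (1 + s * x * Q * w + Q * x\<^sup>2 * Q\<^sup>2 * w\<^sup>2)
      - (1 + s * x) * (x * Q * w * w * w * Q * (1 - x * Q * w)) - x * Q * w * w * (1 - x * Q * w) * (1 - Q * w))"
    unfolding E closed s_def[symmetric] by (simp add: algebra_simps)
  also have "\<dots> = F * (x ^ 3 * w ^ 4 * Q ^ 4 * (1 - x * Q * w)
      - x\<^sup>2 * w * w * Q * (1 - Q * w) * (1 + s * x * Q * w + Q * x\<^sup>2 * Q\<^sup>2 * w\<^sup>2))"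
    by algebra
  also have "\<dots> = Kcorr x (Suc (Suc m)) - Kcorr x (Suc m) * E"
    unfolding E closed by (simp add: algebra_simps)
  finally show ?thesis .
qed

lemma K_terms_telescope:
  fixes m :: nat and x :: complex
  assumes x: "norm x \<le> 1"
  defines "T\<^sub>1 n \<equiv> Kcoeff x n * P (x * Q ^ n)"
    and "T\<^sub>2 n \<equiv> Kcoeff (x * Q) n * P (x * Q * Q ^ n)"
    and "T\<^sub>3 n \<equiv> Kcoeff (x * Q * Q) n * P (x * Q * Q * Q ^ n)"
    and "V n \<equiv> Kcorr x n * P (x * Q ^ n)"
  shows "T\<^sub>1 0 - (1 + (a + b) * x) * T\<^sub>2 0 = V 1 - V 0"
    and "T\<^sub>1 (Suc m) - (1 + (a + b) * x) * T\<^sub>2 (Suc m) - x * Q * (1 - x * Q) * T\<^sub>3 m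
      = V (Suc (Suc m)) - V (Suc m)"
proof -
  have shift: "P (x * Q ^ n) = (1 + a * x * Q ^ n) * (1 + b * x * Q ^ n) * P (x * Q ^ Suc n)" for n
    by (rule P_shift_power[OF x])
  have "T\<^sub>1 0 - (1 + (a + b) * x) * T\<^sub>2 0 = ((1 + a * x) * (1 + b * x) - (1 + (a + b) * x)) * P (x * Q)"
    using shift[of 0] by (simp add: T\<^sub>1_def T\<^sub>2_def Kcoeff_def algebra_simps)
  also have "(1 + a * x) * (1 + b * x) - (1 + (a + b) * x) = x\<^sup>2 * Q"
    using ab by (simp add: algebra_simps power2_eq_square)
  also have "x\<^sup>2 * Q * P (x * Q) = V 1 - V 0"
    by (simp add: V_def Kcorr_def power2_eq_square)
  finally show "T\<^sub>1 0 - (1 + (a + b) * x) * T\<^sub>2 0 = V 1 - V 0" .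
  have "T\<^sub>1 (Suc m) - (1 + (a + b) * x) * T\<^sub>2 (Suc m) - x * Q * (1 - x * Q) * T\<^sub>3 m
      = (Kcoeff x (Suc m) * ((1 + a * x * Q ^ Suc m) * (1 + b * x * Q ^ Suc m))
          - (1 + (a + b) * x) * Kcoeff (x * Q) (Suc m) - x * Q * (1 - x * Q) * Kcoeff (x * Q * Q) m)
        * P (x * Q ^ Suc (Suc m))"
    using shift[of "Suc m"] by (simp add: T\<^sub>1_def T\<^sub>2_def T\<^sub>3_def algebra_simps)
  also have "\<dots> = (Kcorr x (Suc (Suc m)) - Kcorr x (Suc m) * ((1 + a * x * Q ^ Suc m) * (1 + b * x * Q ^ Suc m)))
        * P (x * Q ^ Suc (Suc m))"
    by (simp only: Kcoeff_step[OF x])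
  also have "\<dots> = V (Suc (Suc m)) - V (Suc m)"
    using shift[of "Suc m"] by (simp add: V_def algebra_simps)
  finally show "T\<^sub>1 (Suc m) - (1 + (a + b) * x) * T\<^sub>2 (Suc m) - x * Q * (1 - x * Q) * T\<^sub>3 m
      = V (Suc (Suc m)) - V (Suc m)" .
qed


lemma K_functional_equation:
  assumes x: "norm x \<le> 1"
  shows "K x = (1 + (a + b) * x) * K (x * Q) + x * Q * (1 - x * Q) * K (x * Q * Q)"
proof -
  obtain C where C: "C \<ge> 0"
    "\<And>x n. norm x \<le> 1 \<Longrightarrow> norm (Kcoeff x n * P (x * Q ^ n)) \<le> C * norm x ^ n * norm Q ^ n"
    "\<And>x n. norm x \<le> 1 \<Longrightarrow> norm (Kcorr x n * P (x * Q ^ n)) \<le> C * norm Q ^ n"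
    by (rule K_terms_bounded) blast
  define T\<^sub>1 where "T\<^sub>1 n = Kcoeff x n * P (x * Q ^ n)" for n
  define T\<^sub>2 where "T\<^sub>2 n = Kcoeff (x * Q) n * P (x * Q * Q ^ n)" for n
  define T\<^sub>3 where "T\<^sub>3 n = Kcoeff (x * Q * Q) n * P (x * Q * Q * Q ^ n)" for n
  define T\<^sub>3' where "T\<^sub>3' n = (case n of 0 \<Rightarrow> 0 | Suc m \<Rightarrow> T\<^sub>3 m)" for n
  define V where "V n = Kcorr x n * P (x * Q ^ n)" for n
  have xQ: "norm (x * Q) \<le> 1" and xQQ: "norm (x * Q * Q) \<le> 1"
    using norm_mult_power_le_1[OF x, of 1] norm_mult_power_le_1[OF x, of 2]
    by (simp_all add: power2_eq_square mult.assoc)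
  have "T\<^sub>3 sums K (x * Q * Q)"
    unfolding T\<^sub>3_def by (rule K_sums[OF xQQ])
  then have "(\<lambda>n. T\<^sub>3' (Suc n)) sums K (x * Q * Q)"
    by (simp add: T\<^sub>3'_def)
  then have "T\<^sub>3' sums (K (x * Q * Q) + T\<^sub>3' 0)"
    by (simp only: sums_Suc_iff)
  then have "T\<^sub>3' sums K (x * Q * Q)"
    by (simp add: T\<^sub>3'_def)
  then have "(\<lambda>n. T\<^sub>1 n - (1 + (a + b) * x) * T\<^sub>2 n - x * Q * (1 - x * Q) * T\<^sub>3' n) sums
      (K x - (1 + (a + b) * x) * K (x * Q) - x * Q * (1 - x * Q) * K (x * Q * Q))"
    unfolding T\<^sub>1_def T\<^sub>2_def by (intro sums_diff sums_mult K_sums x xQ)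
  moreover have "T\<^sub>1 n - (1 + (a + b) * x) * T\<^sub>2 n - x * Q * (1 - x * Q) * T\<^sub>3' n = V (Suc n) - V n" for n
    using K_terms_telescope[OF x, folded T\<^sub>1_def T\<^sub>2_def T\<^sub>3_def V_def]
    by (cases n) (simp_all add: T\<^sub>3'_def)
  moreover have "V \<longlonglongrightarrow> 0"
  proof (rule Lim_null_comparison)
    show "eventually (\<lambda>n. norm (V n) \<le> C * norm Q ^ n) sequentially"
      using C(3)[OF x] by (simp add: V_def)
    show "(\<lambda>n. C * norm Q ^ n) \<longlonglongrightarrow> 0"
      by (intro tendsto_mult_right_zero LIMSEQ_power_zero) (use Q in simp)
  qed
  then have "(\<lambda>n. V (Suc n) - V n) sums 0"
    using telescope_sums[of V 0] by (simp add: V_def Kcorr_def)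
  ultimately have "K x - (1 + (a + b) * x) * K (x * Q) - x * Q * (1 - x * Q) * K (x * Q * Q) = 0"
    by (metis (no_types, lifting) sums_cong sums_unique2)
  then show ?thesis by (simp add: algebra_simps)
qed

lemma K_recurrence:
  "K (Q ^ j) = (1 + (a + b) * Q ^ j) * K (Q ^ Suc j) + Q ^ Suc j * (1 - Q ^ Suc j) * K (Q ^ Suc (Suc j))"
  using K_functional_equation[of "Q ^ j"] Q by (simp add: norm_power power_le_one algebra_simps)


lemma P_power_tendsto_1: "(\<lambda>j. P (Q ^ j)) \<longlonglongrightarrow> 1"
proof (rule LIM_zero_cancel, rule Lim_null_comparison)
  have "norm (P (Q ^ j) - 1) \<le> exp (norm Q ^ j * ab_norm / (1 - norm Q)) - 1" for j
    using norm_P_minus_1_le[of "Q ^ j"] Q by (simp add: norm_power power_le_one)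
  then show "eventually (\<lambda>j. norm (P (Q ^ j) - 1) \<le> exp (norm Q ^ j * ab_norm / (1 - norm Q)) - 1) sequentially"
    by simp
  have "(\<lambda>j. exp (norm Q ^ j * ab_norm / (1 - norm Q)) - 1) \<longlonglongrightarrow> exp (0 * ab_norm / (1 - norm Q)) - 1"
    by (intro tendsto_intros LIMSEQ_power_zero) (use Q in auto)
  then show "(\<lambda>j. exp (norm Q ^ j * ab_norm / (1 - norm Q)) - 1) \<longlonglongrightarrow> 0" by simp
qed

lemma K_term_power_tendsto:
  "(\<lambda>j. Kcoeff (Q ^ j) n * P (Q ^ j * Q ^ n)) \<longlonglongrightarrow> (if n = 0 then 1 else 0)"
proof (cases n)
  case 0
  then show ?thesis using P_power_tendsto_1 by (simp add: Kcoeff_def)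
next
  case (Suc m)
  obtain C where C: "C \<ge> 0"
    "\<And>x n. norm x \<le> 1 \<Longrightarrow> norm (Kcoeff x n * P (x * Q ^ n)) \<le> C * norm x ^ n * norm Q ^ n"
    "\<And>x n. norm x \<le> 1 \<Longrightarrow> norm (Kcorr x n * P (x * Q ^ n)) \<le> C * norm Q ^ n"
    by (rule K_terms_bounded) blast
  have "(\<lambda>j. Kcoeff (Q ^ j) n * P (Q ^ j * Q ^ n)) \<longlonglongrightarrow> 0"
  proof (rule Lim_null_comparison)
    have "norm (Kcoeff (Q ^ j) n * P (Q ^ j * Q ^ n)) \<le> C * norm Q ^ n * norm Q ^ j" for j
    proof -
      have "(norm Q ^ j) ^ n \<le> (norm Q ^ j) ^ 1"
        using Suc Q by (intro power_decreasing) (auto simp: power_le_one)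
      then have "norm (Q ^ j) ^ n \<le> norm Q ^ j"
        by (simp add: norm_power)
      then have "C * norm (Q ^ j) ^ n * norm Q ^ n \<le> C * norm Q ^ j * norm Q ^ n"
        by (intro mult_right_mono mult_left_mono) (use C in auto)
      then show ?thesis
        using C(2)[of "Q ^ j" n] Q by (simp add: norm_power power_le_one algebra_simps)
    qed
    then show "eventually (\<lambda>j. norm (Kcoeff (Q ^ j) n * P (Q ^ j * Q ^ n)) \<le> C * norm Q ^ n * norm Q ^ j) sequentially"
      by simp
    show "(\<lambda>j. C * norm Q ^ n * norm Q ^ j) \<longlonglongrightarrow> 0"
      by (intro tendsto_mult_right_zero LIMSEQ_power_zero) (use Q in simp)
  qed
  then show ?thesis using Suc by simp
qed

lemma K_power_tendsto_1: "(\<lambda>j. K (Q ^ j)) \<longlonglongrightarrow> 1"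
proof -
  obtain C where C: "C \<ge> 0"
    "\<And>x n. norm x \<le> 1 \<Longrightarrow> norm (Kcoeff x n * P (x * Q ^ n)) \<le> C * norm x ^ n * norm Q ^ n"
    "\<And>x n. norm x \<le> 1 \<Longrightarrow> norm (Kcorr x n * P (x * Q ^ n)) \<le> C * norm Q ^ n"
    by (rule K_terms_bounded) blast
  have "(\<lambda>j. \<Sum>n. Kcoeff (Q ^ j) n * P (Q ^ j * Q ^ n)) \<longlonglongrightarrow> (\<Sum>n. if n = 0 then 1 else 0 :: complex)"
  proof (rule tannerys_theorem[THEN conjunct2, THEN conjunct2])
    have "norm (Kcoeff (Q ^ j) n * P (Q ^ j * Q ^ n)) \<le> C * norm Q ^ n" for n j
    proof -
      have "C * norm (Q ^ j) ^ n \<le> C"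
        using Q C(1) by (simp add: norm_power mult_left_le power_le_one)
      then show ?thesis
        using C(2)[of "Q ^ j" n] Q mult_right_mono[of "C * norm (Q ^ j) ^ n" C "norm Q ^ n"]
        by (simp add: norm_power power_le_one)
    qed
    then show "eventually (\<lambda>(n, j). norm (Kcoeff (Q ^ j) n * P (Q ^ j * Q ^ n)) \<le> C * norm Q ^ n)
        (at_top \<times>\<^sub>F sequentially)"
      by (intro always_eventually) auto
    show "summable (\<lambda>n. C * norm Q ^ n)"
      by (intro summable_mult summable_geometric) (use Q in auto)
  qed (use K_term_power_tendsto in auto)
  moreover have "(\<Sum>n. if n = 0 then 1 else 0 :: complex) = 1"
    by (subst suminf_finite[of "{0}"]) auto
  ultimately show ?thesis by (simp add: K_def)
qed

lemma K_Q_sums: "(\<lambda>n. Q ^ (n * (n + 1)) * P (Q ^ Suc n)) sums K Q"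
proof -
  have "Kcoeff Q n = Q ^ (n * (n + 1))" for n
    using qpoch_self_nonzero[OF Q, of n] by (simp add: Kcoeff_def power_add[symmetric] algebra_simps)
  then show ?thesis using K_sums[of Q] Q by simp
qed

lemma P_1_split: "P 1 = (\<Prod>k<N. (1 + a * Q ^ k) * (1 + b * Q ^ k)) * P (Q ^ N)"
proof (induction N)
  case (Suc N)
  then show ?case using P_shift_power[of 1 N] by (simp add: algebra_simps)
qed simp

theorem P_1_times_g3:
  assumes "a \<noteq> 0"
  shows "P 1 * g3 (- a) Q = K Q"
proof -
  have factor: "(1 + a * Q ^ k) * (1 + b * Q ^ k) \<noteq> 0" for k
    using twin_factor_nonzero[of "Q ^ k"] Q by (simp add: norm_power power_le_one algebra_simps)
  have P1: "P 1 \<noteq> 0"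
    unfolding twin_prod_def using prodinf_nonzero[OF convergent_prod_P[of 1]] factor by simp
  have "inverse (- a) * Q = - b" using assms ab by (simp add: field_simps)
  then have denominator: "qpoch (- a) Q (Suc n) * qpoch (inverse (- a) * Q) Q (Suc n)
      = (\<Prod>k<Suc n. (1 + a * Q ^ k) * (1 + b * Q ^ k))" for n
    by (simp only: qpoch_def prod.distrib[symmetric]) simp
  have summand: "Q ^ (n * (n + 1)) / (qpoch (- a) Q (n + 1) * qpoch (inverse (- a) * Q) Q (n + 1))
      = Q ^ (n * (n + 1)) * P (Q ^ Suc n) / P 1" for n
    using P1 unfolding Suc_eq_plus1[symmetric] denominator P_1_split[of "Suc n"] by simp
  have "(\<lambda>n. Q ^ (n * (n + 1)) * P (Q ^ Suc n) / P 1) sums (K Q / P 1)"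
    by (rule sums_divide[OF K_Q_sums])
  then have "g3 (- a) Q = K Q / P 1"
    unfolding g3_def summand by (rule sums_unique[symmetric])
  then show ?thesis using P1 by simp
qed


lemma recurrence_coeff_bound:
  "norm (1 + (a + b) * Q ^ j) + norm (Q ^ Suc j * (1 - Q ^ Suc j)) \<le> 1 + (norm a + norm b + 2) * norm Q ^ j"
proof -
  have "norm (1 + (a + b) * Q ^ j) \<le> 1 + norm ((a + b) * Q ^ j)"
    by (metis norm_one norm_triangle_ineq)
  also have "norm ((a + b) * Q ^ j) \<le> (norm a + norm b) * norm Q ^ j"
    by (simp add: norm_mult norm_power mult_right_mono norm_triangle_ineq)
  finally have first: "norm (1 + (a + b) * Q ^ j) \<le> 1 + (norm a + norm b) * norm Q ^ j" by simp
  have "norm (1 - Q ^ Suc j) \<le> 1 + norm (Q ^ Suc j)" by (metis norm_one norm_triangle_ineq4)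
  also have "norm (Q ^ Suc j) \<le> 1" using norm_power_less_one[OF Q, of "Suc j"] by simp
  finally have "norm (1 - Q ^ Suc j) \<le> 2" by simp
  moreover have "norm Q ^ Suc j \<le> norm Q ^ j" using Q by (intro power_decreasing) auto
  ultimately have "norm (Q ^ Suc j * (1 - Q ^ Suc j)) \<le> norm Q ^ j * 2"
    unfolding norm_mult norm_power by (intro mult_mono) auto
  with first show ?thesis by (simp add: algebra_simps)
qed


end

section \<open>Partitions with gap conditions\<close>

text \<open>The partitions counted by \<open>C_count\<close>, listed in increasing order and with all parts at
  least \<open>L\<close>, form \<open>gap_lists d r L\<close>; \<open>C_gen\<close> is the generating function \<open>gap_gf\<close> at \<open>L = d + 1\<close>.\<close>

definition admissible_part :: "nat \<Rightarrow> nat \<Rightarrow> nat \<Rightarrow> bool" where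
  "admissible_part d r x \<longleftrightarrow> x mod d = 0 \<or> x mod d = r \<or> x mod d = d - r"

definition gap_ok :: "nat \<Rightarrow> nat \<Rightarrow> nat \<Rightarrow> bool" where
  "gap_ok d y x \<longleftrightarrow> y + d \<le> x \<and> (d dvd x \<longrightarrow> y + d < x)"

definition gap_lists :: "nat \<Rightarrow> nat \<Rightarrow> nat \<Rightarrow> nat list set" where
  "gap_lists d r L = {ys. successively (gap_ok d) ys \<and> (\<forall>y\<in>set ys. admissible_part d r y \<and> L \<le> y)}"

definition gap_gf :: "nat \<Rightarrow> nat \<Rightarrow> complex \<Rightarrow> nat \<Rightarrow> complex" where
  "gap_gf d r q L = infsum (\<lambda>ys. q ^ sum_list ys) (gap_lists d r L)"

definition next_level :: "nat \<Rightarrow> nat \<Rightarrow> nat" where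
  "next_level d L = L + d + (if d dvd L then 1 else 0)"

lemma gap_ok_iff_next_level: "gap_ok d L x \<longleftrightarrow> next_level d L \<le> x"
proof (cases "d dvd L")
  case True
  then have "d dvd L + d" by simp
  then show ?thesis using True by (auto simp: gap_ok_def next_level_def le_less)
next
  case False
  then have "\<not> d dvd L + d" by (simp add: dvd_add_left_iff)
  then show ?thesis using False by (auto simp: gap_ok_def next_level_def le_less)
qed

lemma sorted_if_gap_ok: "0 < d \<Longrightarrow> successively (gap_ok d) ys \<Longrightarrow> sorted_wrt (<) ys"
  unfolding successively_conv_sorted_wrt[symmetric, OF transp_on_less]
  by (erule successively_mono) (auto simp: gap_ok_def)

lemma hd_le_if_sorted: "sorted_wrt (<) zs \<Longrightarrow> y \<in> set zs \<Longrightarrow> hd zs \<le> (y::nat)"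
  by (cases zs) auto

lemma valid_C_partition_iff_gap_lists:
  assumes "0 < d"
  shows "valid_C_partition d r xs \<longleftrightarrow> rev xs \<in> gap_lists d r (Suc d)"
proof -
  have gaps: "(\<forall>i. Suc i < length xs \<longrightarrow> xs ! Suc i + d \<le> xs ! i \<and> (d dvd xs ! i \<longrightarrow> xs ! Suc i + d < xs ! i))
      \<longleftrightarrow> successively (gap_ok d) (rev xs)"
    unfolding successively_rev by (simp only: successively_conv_nth gap_ok_def)
  have least: "(xs \<noteq> [] \<longrightarrow> d < last xs) \<longleftrightarrow> (\<forall>y\<in>set xs. Suc d \<le> y)"
    if gap: "successively (gap_ok d) (rev xs)"
  proof
    assume "xs \<noteq> [] \<longrightarrow> d < last xs"
    moreover have "last xs \<le> y" if "y \<in> set xs" for y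
      using hd_le_if_sorted[OF sorted_if_gap_ok[OF assms gap], of y] that by (auto simp: hd_rev)
    ultimately show "\<forall>y\<in>set xs. Suc d \<le> y"
      by (metis Suc_leI empty_iff list.set(1) order.strict_trans2)
  next
    assume "\<forall>y\<in>set xs. Suc d \<le> y"
    then show "xs \<noteq> [] \<longrightarrow> d < last xs" using last_in_set Suc_le_eq by blast
  qed
  show ?thesis
  proof
    assume "valid_C_partition d r xs"
    then show "rev xs \<in> gap_lists d r (Suc d)"
      using least unfolding valid_C_partition_def gap_lists_def admissible_part_def gaps by simp
  next
    assume "rev xs \<in> gap_lists d r (Suc d)"
    then show "valid_C_partition d r xs"
      using least unfolding valid_C_partition_def gap_lists_def admissible_part_def gaps by simp
  qed
qed

lemma sum_power_sum_list_le:
  fixes \<sigma> :: real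
  assumes \<sigma>: "0 \<le> \<sigma>" "\<sigma> < 1" and F: "finite F" "F \<subseteq> {ys. sorted_wrt (<) ys}"
  shows "(\<Sum>ys\<in>F. \<sigma> ^ sum_list ys) \<le> exp (1 / (1 - \<sigma>))"
proof -
  define U where "U = \<Union> (set ` F)"
  have U: "finite U" unfolding U_def using F by simp
  have inj: "inj_on set F"
    by (rule inj_onI) (use F in \<open>auto intro: strict_sorted_equal\<close>)
  have "sum_list ys = sum id (set ys)" if "ys \<in> F" for ys
    using F(2) that distinct_sum_list_conv_Sum[of ys] by (auto simp: strict_sorted_iff)
  then have "(\<Sum>ys\<in>F. \<sigma> ^ sum_list ys) = (\<Sum>ys\<in>F. \<sigma> ^ sum id (set ys))"
    by simp
  also have "\<dots> = (\<Sum>A\<in>set ` F. \<sigma> ^ sum id A)"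
    by (simp add: sum.reindex[OF inj])
  also have "\<dots> \<le> (\<Sum>A\<in>Pow U. \<sigma> ^ sum id A)"
    by (rule sum_mono2) (use U \<sigma> in \<open>auto simp: U_def\<close>)
  also have "\<dots> = (\<Sum>A\<in>Pow U. (\<Prod>k\<in>A. \<sigma> ^ k) * (\<Prod>k\<in>U - A. 1))"
    by (simp add: power_sum)
  also have "\<dots> = (\<Prod>k\<in>U. \<sigma> ^ k + 1)"
    by (rule prod_add[OF U, symmetric])
  also have "\<dots> \<le> exp (\<Sum>k\<in>U. \<sigma> ^ k)"
    using prod_le_exp_sum[of U "\<lambda>k. \<sigma> ^ k"] \<sigma> by (simp add: add.commute)
  also have "(\<Sum>k\<in>U. \<sigma> ^ k) \<le> (\<Sum>k. \<sigma> ^ k)"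
    by (rule sum_le_suminf) (use \<sigma> U in \<open>auto intro: summable_geometric\<close>)
  also have "(\<Sum>k. \<sigma> ^ k) = 1 / (1 - \<sigma>)" using suminf_geometric[of \<sigma>] \<sigma> by simp
  finally show ?thesis by simp
qed

lemma summable_on_power_sum_list_real:
  fixes \<sigma> :: real
  assumes "0 \<le> \<sigma>" "\<sigma> < 1"
  shows "(\<lambda>ys. \<sigma> ^ sum_list ys) summable_on {ys. sorted_wrt (<) ys}"
proof (rule nonneg_bdd_above_summable_on)
  show "0 \<le> \<sigma> ^ sum_list ys" for ys using assms by simp
  show "bdd_above (sum (\<lambda>ys. \<sigma> ^ sum_list ys) ` {F. F \<subseteq> {ys. sorted_wrt (<) ys} \<and> finite F})"
    by (rule bdd_aboveI2[of _ _ "exp (1 / (1 - \<sigma>))"]) (use sum_power_sum_list_le[OF assms] in auto)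
qed

lemma summable_on_power_sum_list:
  fixes q :: complex
  assumes q: "norm q < 1" and A: "A \<subseteq> {ys. sorted_wrt (<) ys}"
  shows "(\<lambda>ys. q ^ sum_list ys) summable_on A"
proof -
  have "(\<lambda>ys. norm q ^ sum_list ys) summable_on A"
    by (rule summable_on_subset_banach[OF summable_on_power_sum_list_real A]) (use q in auto)
  then have "(\<lambda>ys. norm (q ^ sum_list ys)) summable_on A" by (simp add: norm_power)
  then show ?thesis by (rule abs_summable_summable)
qed

lemma gap_lists_sorted: "0 < d \<Longrightarrow> gap_lists d r L \<subseteq> {ys. sorted_wrt (<) ys}"
  by (auto simp: gap_lists_def intro: sorted_if_gap_ok)

lemma gap_lists_skip:
  assumes "\<not> admissible_part d r L"
  shows "gap_lists d r L = gap_lists d r (Suc L)"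
  using assms unfolding gap_lists_def by (force simp: le_less Suc_le_eq)

lemma gap_lists_subset_step:
  assumes d: "0 < d"
  shows "gap_lists d r L \<subseteq> gap_lists d r (Suc L) \<union> Cons L ` gap_lists d r (next_level d L)"
proof
  fix ys assume ys: "ys \<in> gap_lists d r L"
  then have gaps: "successively (gap_ok d) ys" and parts: "\<forall>y\<in>set ys. admissible_part d r y \<and> L \<le> y"
    by (auto simp: gap_lists_def)
  have sorted: "sorted_wrt (<) ys" by (rule sorted_if_gap_ok[OF d gaps])
  show "ys \<in> gap_lists d r (Suc L) \<union> Cons L ` gap_lists d r (next_level d L)"
  proof (cases "ys = [] \<or> hd ys \<noteq> L")
    case True
    have "Suc L \<le> y" if y: "y \<in> set ys" for y
    proof -
      have "ys \<noteq> []" using y by auto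
      then have "hd ys \<in> set ys" "hd ys \<noteq> L" using True by simp_all
      then have "Suc L \<le> hd ys" using parts by (metis Suc_leI le_neq_implies_less)
      then show ?thesis using hd_le_if_sorted[OF sorted y] by simp
    qed
    then show ?thesis using gaps parts by (auto simp: gap_lists_def)
  next
    case False
    then obtain zs where zs: "ys = L # zs" by (cases ys) auto
    have "next_level d L \<le> z" if z: "z \<in> set zs" for z
    proof -
      have "gap_ok d L (hd zs)" using gaps z zs by (auto simp: successively_Cons)
      moreover have "hd zs \<le> z" using hd_le_if_sorted[of zs z] sorted z zs by simp
      ultimately show ?thesis by (simp add: gap_ok_iff_next_level)
    qed
    then have "zs \<in> gap_lists d r (next_level d L)"
      using gaps parts zs by (auto simp: gap_lists_def successively_Cons)
    then show ?thesis using zs by simp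
  qed
qed

lemma gap_lists_step:
  assumes d: "0 < d" and L: "admissible_part d r L"
  shows "gap_lists d r L = gap_lists d r (Suc L) \<union> Cons L ` gap_lists d r (next_level d L)"
proof (intro equalityI subsetI)
  show "ys \<in> gap_lists d r (Suc L) \<union> Cons L ` gap_lists d r (next_level d L)" if "ys \<in> gap_lists d r L" for ys
    using gap_lists_subset_step[OF d] that by blast
next
  fix ys assume "ys \<in> gap_lists d r (Suc L) \<union> Cons L ` gap_lists d r (next_level d L)"
  then show "ys \<in> gap_lists d r L"
  proof
    assume "ys \<in> gap_lists d r (Suc L)"
    then show ?thesis by (auto simp: gap_lists_def)
  next
    assume "ys \<in> Cons L ` gap_lists d r (next_level d L)"
    then obtain zs where ys: "ys = L # zs" and zs: "zs \<in> gap_lists d r (next_level d L)" by auto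
    have "zs \<noteq> [] \<longrightarrow> gap_ok d L (hd zs)"
      using zs by (auto simp: gap_lists_def gap_ok_iff_next_level)
    moreover have "L \<le> next_level d L" by (simp add: next_level_def)
    ultimately show ?thesis
      using zs L unfolding ys gap_lists_def by (auto simp: successively_Cons)
  qed
qed

lemma gap_gf_skip: "\<not> admissible_part d r L \<Longrightarrow> gap_gf d r q L = gap_gf d r q (Suc L)"
  by (simp add: gap_gf_def gap_lists_skip)

lemma gap_gf_skip_range:
  assumes "\<And>L. A \<le> L \<Longrightarrow> L < B \<Longrightarrow> \<not> admissible_part d r L" and "A \<le> B"
  shows "gap_gf d r q A = gap_gf d r q B"
  using assms(2)
proof (induction B rule: dec_induct)
  case (step n)
  then show ?case using gap_gf_skip[OF assms(1)[of n]] by simp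
qed simp

lemma gap_gf_step:
  assumes d: "0 < d" and L: "admissible_part d r L" and q: "norm q < 1"
  shows "gap_gf d r q L = gap_gf d r q (Suc L) + q ^ L * gap_gf d r q (next_level d L)"
proof -
  let ?L' = "next_level d L"
  have summable: "(\<lambda>ys. q ^ sum_list ys) summable_on A" if "A \<subseteq> gap_lists d r L'" for A L'
    by (rule summable_on_power_sum_list[OF q order.trans[OF that gap_lists_sorted[OF d]]])
  have sub: "Cons L ` gap_lists d r ?L' \<subseteq> gap_lists d r L"
    using gap_lists_step[OF d L] by blast
  have "gap_gf d r q L = gap_gf d r q (Suc L) + infsum (\<lambda>ys. q ^ sum_list ys) (Cons L ` gap_lists d r ?L')"
    unfolding gap_gf_def gap_lists_step[OF d L]
    by (rule infsum_Un_disjoint[OF summable[OF order_refl] summable[OF sub]]) (auto simp: gap_lists_def)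
  also have "infsum (\<lambda>ys. q ^ sum_list ys) (Cons L ` gap_lists d r ?L')
      = infsum (\<lambda>zs. q ^ L * q ^ sum_list zs) (gap_lists d r ?L')"
    by (subst infsum_reindex) (auto simp: o_def power_add)
  also have "\<dots> = q ^ L * gap_gf d r q ?L'"
    unfolding gap_gf_def by (rule infsum_cmult_right[OF summable[OF order_refl]])
  finally show ?thesis .
qed


lemma next_level_residue:
  assumes "0 < t" "t < d"
  shows "next_level d (d * j + t) = d * Suc j + t"
proof -
  have "\<not> d dvd d * j + t" using assms by (simp add: dvd_add_right_iff nat_dvd_not_less)
  then show ?thesis by (simp add: next_level_def)
qed

lemma next_level_multiple: "next_level d (d * j) = d * Suc j + 1"
  by (simp add: next_level_def)

context
  fixes d r :: nat and q :: complex
  assumes d: "3 \<le> d" and r: "1 \<le> r" "2 * r < d" and q: "norm q < 1"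
begin

lemma gap_gf_skip_residues:
  assumes "s \<le> t" "t \<le> d" "\<And>u. s \<le> u \<Longrightarrow> u < t \<Longrightarrow> u \<noteq> 0 \<and> u \<noteq> r \<and> u \<noteq> d - r"
  shows "gap_gf d r q (d * j + s) = gap_gf d r q (d * j + t)"
proof (rule gap_gf_skip_range)
  fix L assume "d * j + s \<le> L" "L < d * j + t"
  moreover define u where "u = L - d * j"
  ultimately have "L = d * j + u" "s \<le> u" "u < t" by auto
  then show "\<not> admissible_part d r L"
    using assms(2,3) by (simp add: admissible_part_def)
qed (use assms in simp)

lemma gap_gf_step_residue:
  assumes "t = r \<or> t = d - r"
  shows "gap_gf d r q (d * j + t) = gap_gf d r q (d * j + t + 1) + q ^ (d * j + t) * gap_gf d r q (d * Suc j + t)"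
proof -
  have t: "0 < t" "t < d" using assms r by auto
  then have "admissible_part d r (d * j + t)" using assms by (auto simp: admissible_part_def)
  from gap_gf_step[OF _ this q] show ?thesis
    using t by (simp add: next_level_residue)
qed

lemma gap_gf_step_multiple:
  "gap_gf d r q (d * Suc j) = gap_gf d r q (d * Suc j + 1) + q ^ (d * Suc j) * gap_gf d r q (d * Suc (Suc j) + 1)"
proof -
  have "admissible_part d r (d * Suc j)" by (simp add: admissible_part_def)
  from gap_gf_step[OF _ this q] show ?thesis
    using d by (simp only: next_level_multiple) simp
qed

definition block_gf :: "nat \<Rightarrow> complex" where
  "block_gf j = gap_gf d r q (d * j + 1)"

lemma block_gf_recurrence:
  "block_gf j = (1 + (q ^ r + q ^ (d - r)) * (q ^ d) ^ j) * block_gf (Suc j)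
    + (q ^ d) ^ Suc j * (1 - (q ^ d) ^ Suc j) * block_gf (Suc (Suc j))"
proof -
  define H where "H = gap_gf d r q"
  define Q where "Q = q ^ d"
  define a where "a = q ^ r"
  define b where "b = q ^ (d - r)"
  have ab: "a * b = Q" unfolding a_def b_def Q_def using r by (simp add: power_add[symmetric])
  have skip_r: "H (d * i + 1) = H (d * i + r)" for i
    unfolding H_def using r by (intro gap_gf_skip_residues) auto
  have skip_d_r: "H (d * i + r + 1) = H (d * i + (d - r))" for i
    unfolding H_def using r by (subst add.assoc, intro gap_gf_skip_residues) auto
  have skip_d: "H (d * i + (d - r) + 1) = H (d * Suc i)" for i
    unfolding H_def using gap_gf_skip_residues[of "d - r + 1" d i] r by (simp add: algebra_simps)
  have step_r: "H (d * i + r) = H (d * i + r + 1) + Q ^ i * a * block_gf (Suc i)" for i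
    using gap_gf_step_residue[of r i] skip_r[of "Suc i"]
    by (simp add: H_def block_gf_def Q_def a_def power_add power_mult)
  have step_d_r: "H (d * i + (d - r)) = H (d * i + (d - r) + 1) + Q ^ i * b * H (d * Suc i + (d - r))" for i
    using gap_gf_step_residue[of "d - r" i] by (simp add: H_def Q_def b_def power_add power_mult)
  have step_d: "H (d * Suc i) = block_gf (Suc i) + Q ^ Suc i * block_gf (Suc (Suc i))" for i
    using gap_gf_step_multiple[of i] by (simp add: H_def block_gf_def Q_def power_add power_mult)
  have upper: "H (d * Suc j + (d - r)) = block_gf (Suc j) - Q ^ Suc j * a * block_gf (Suc (Suc j))"
    using step_r[of "Suc j"] skip_d_r[of "Suc j"] skip_r[of "Suc j"] by (simp add: block_gf_def H_def)
  have "block_gf j = H (d * j + r)" unfolding block_gf_def H_def[symmetric] by (rule skip_r)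
  also have "\<dots> = H (d * j + (d - r)) + Q ^ j * a * block_gf (Suc j)" by (simp only: step_r skip_d_r)
  also have "H (d * j + (d - r)) = H (d * Suc j) + Q ^ j * b * H (d * Suc j + (d - r))"
    by (subst step_d_r) (simp only: skip_d)
  finally have "block_gf j = H (d * Suc j) + Q ^ j * b * H (d * Suc j + (d - r)) + Q ^ j * a * block_gf (Suc j)" .
  also have "\<dots> = (1 + (a + b) * Q ^ j) * block_gf (Suc j) + Q ^ Suc j * (1 - Q ^ j * (a * b)) * block_gf (Suc (Suc j))"
    unfolding step_d upper by (simp add: algebra_simps)
  also have "Q ^ j * (a * b) = Q ^ Suc j" by (simp add: ab)
  finally show ?thesis by (simp only: Q_def a_def b_def)
qed


lemma norm_gap_gf_minus_1_le:
  assumes "1 \<le> L"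
  defines "\<sigma> \<equiv> sqrt (norm q)"
  shows "norm (gap_gf d r q L - 1) \<le> \<sigma> ^ L * infsum (\<lambda>ys. \<sigma> ^ sum_list ys) {ys. sorted_wrt (<) ys}"
proof -
  have \<sigma>: "0 \<le> \<sigma>" "\<sigma> < 1" "\<sigma>\<^sup>2 = norm q" using q by (auto simp: \<sigma>_def)
  define S where "S = gap_lists d r L - {[]}"
  have S: "S \<subseteq> {ys. sorted_wrt (<) ys}"
    using gap_lists_sorted[of d r L] d by (auto simp: S_def)
  have summable: "(\<lambda>ys. f (sum_list ys)) summable_on S"
    if "(\<lambda>ys. f (sum_list ys)) summable_on {ys. sorted_wrt (<) ys}" "\<And>n. f n \<ge> (0::real)" for f
    by (rule summable_on_subset_banach[OF that(1) S])
  have "gap_gf d r q L = infsum (\<lambda>ys. q ^ sum_list ys) ({[]} \<union> S)"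
    unfolding gap_gf_def S_def by (simp add: gap_lists_def insert_absorb)
  also have "\<dots> = 1 + infsum (\<lambda>ys. q ^ sum_list ys) S"
    by (subst infsum_Un_disjoint) (use summable_on_power_sum_list[OF q S] in \<open>auto simp: S_def\<close>)
  finally have gf: "gap_gf d r q L - 1 = infsum (\<lambda>ys. q ^ sum_list ys) S" by simp
  have "(\<lambda>ys. norm (q ^ sum_list ys)) summable_on S"
    using summable[OF summable_on_power_sum_list_real[of "norm q"]] q by (simp add: norm_power)
  then have "norm (gap_gf d r q L - 1) \<le> infsum (\<lambda>ys. norm (q ^ sum_list ys)) S"
    unfolding gf by (rule norm_infsum_bound)
  also have "\<dots> = infsum (\<lambda>ys. norm q ^ sum_list ys) S"
    by (simp add: norm_power)
  also have "\<dots> \<le> infsum (\<lambda>ys. \<sigma> ^ L * \<sigma> ^ sum_list ys) S"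
  proof (rule infsum_mono)
    show "(\<lambda>ys. norm q ^ sum_list ys) summable_on S"
      by (rule summable[OF summable_on_power_sum_list_real]) (use q in auto)
    show "(\<lambda>ys. \<sigma> ^ L * \<sigma> ^ sum_list ys) summable_on S"
      by (rule summable_on_cmult_right, rule summable[OF summable_on_power_sum_list_real[OF \<sigma>(1,2)]])
        (use \<sigma> in auto)
    fix ys assume "ys \<in> S"
    then obtain y where "y \<in> set ys" "L \<le> y" by (cases ys) (auto simp: S_def gap_lists_def)
    then have "L \<le> sum_list ys" using member_le_sum_list[of y ys] by linarith
    then have "\<sigma> ^ (2 * sum_list ys) \<le> \<sigma> ^ (L + sum_list ys)" using \<sigma> by (intro power_decreasing) auto
    then show "norm q ^ sum_list ys \<le> \<sigma> ^ L * \<sigma> ^ sum_list ys"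
      by (simp add: power_add power_mult \<sigma>(3)[symmetric])
  qed
  also have "\<dots> = \<sigma> ^ L * infsum (\<lambda>ys. \<sigma> ^ sum_list ys) S"
    by (rule infsum_cmult_right, rule summable[OF summable_on_power_sum_list_real[OF \<sigma>(1,2)]]) (use \<sigma> in auto)
  also have "\<dots> \<le> \<sigma> ^ L * infsum (\<lambda>ys. \<sigma> ^ sum_list ys) {ys. sorted_wrt (<) ys}"
    by (intro mult_left_mono infsum_mono_neutral summable summable_on_power_sum_list_real) (use \<sigma> S in auto)
  finally show ?thesis .
qed

lemma block_gf_tendsto_1: "block_gf \<longlonglongrightarrow> 1"
proof (rule LIM_zero_cancel, rule Lim_null_comparison)
  define \<sigma> where "\<sigma> = sqrt (norm q)"
  define B where "B = infsum (\<lambda>ys. \<sigma> ^ sum_list ys) {ys. sorted_wrt (<) ys}"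
  have "norm (block_gf j - 1) \<le> \<sigma> ^ (d * j + 1) * B" for j
    unfolding block_gf_def \<sigma>_def B_def by (rule norm_gap_gf_minus_1_le) simp
  then show "eventually (\<lambda>j. norm (block_gf j - 1) \<le> \<sigma> ^ (d * j + 1) * B) sequentially"
    by simp
  have "(\<lambda>L. \<sigma> ^ L * B) \<longlonglongrightarrow> 0"
    using q by (intro tendsto_mult_left_zero LIMSEQ_power_zero) (auto simp: \<sigma>_def)
  moreover have "filterlim (\<lambda>j. d * j + 1) at_top sequentially"
    using d by (intro filterlim_compose[OF filterlim_add_const_nat_at_top mult_nat_left_at_top]) auto
  ultimately show "(\<lambda>j. \<sigma> ^ (d * j + 1) * B) \<longlonglongrightarrow> 0"
    by (rule filterlim_compose)
qed

lemma C_count_eq_card: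
  "C_count d r n = card {ys \<in> gap_lists d r (Suc d). sum_list ys = n}"
proof -
  have "{xs. sum_list xs = n \<and> valid_C_partition d r xs} = rev ` {ys \<in> gap_lists d r (Suc d). sum_list ys = n}"
    using valid_C_partition_iff_gap_lists[of d r] d by (force simp: image_iff)
  then show ?thesis unfolding C_count_def by (simp add: card_image)
qed

lemma finite_gap_lists_sum:
  assumes "1 \<le> L"
  shows "finite {ys \<in> gap_lists d r L. sum_list ys = n}"
proof (rule finite_subset[OF _ finite_lists_length_le[of "{..n}" n]])
  have "set ys \<subseteq> {..n} \<and> length ys \<le> n" if ys: "ys \<in> gap_lists d r L" "sum_list ys = n" for ys
  proof
    show "set ys \<subseteq> {..n}" using member_le_sum_list[of _ ys] ys(2) by auto
    have "\<forall>y\<in>set ys. 1 \<le> y" using ys(1) assms by (auto simp: gap_lists_def)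
    then have "length ys \<le> sum_list ys" by (induction ys) auto
    then show "length ys \<le> n" using ys(2) by simp
  qed
  then show "{ys \<in> gap_lists d r L. sum_list ys = n} \<subseteq> {xs. set xs \<subseteq> {..n} \<and> length xs \<le> n}"
    by blast
qed simp

lemma C_gen_eq_block_gf: "C_gen d r q = block_gf 1"
proof -
  define S where "S = gap_lists d r (Suc d)"
  define F where "F n = {ys \<in> S. sum_list ys = n}" for n
  have "((\<lambda>ys. q ^ sum_list ys) has_sum gap_gf d r q (Suc d)) S"
    unfolding gap_gf_def S_def
    by (rule has_sum_infsum, rule summable_on_power_sum_list[OF q gap_lists_sorted]) (use d in simp)
  moreover have "inj_on (\<lambda>ys. (sum_list ys, ys)) S" by (simp add: inj_on_def)
  moreover have "(\<lambda>ys. (sum_list ys, ys)) ` S = Sigma UNIV F" by (auto simp: F_def image_iff)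
  ultimately have "((\<lambda>(n, ys). q ^ n) has_sum gap_gf d r q (Suc d)) (Sigma UNIV F)"
    using has_sum_reindex[of "\<lambda>ys. (sum_list ys, ys)" S "\<lambda>(n, ys). q ^ n"] by (simp add: o_def)
  then have "((\<lambda>n. of_nat (C_count d r n) * q ^ n) has_sum gap_gf d r q (Suc d)) UNIV"
  proof (rule has_sum_SigmaD)
    fix n
    show "((\<lambda>ys. (\<lambda>(n, ys). q ^ n) (n, ys)) has_sum of_nat (C_count d r n) * q ^ n) (F n)"
      using has_sum_finite[OF finite_gap_lists_sum[of "Suc d" n], of "\<lambda>_. q ^ n"]
      by (simp add: C_count_eq_card F_def S_def)
  qed
  then have "(\<lambda>n. of_nat (C_count d r n) * q ^ n) sums gap_gf d r q (Suc d)"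
    by (rule has_sum_imp_sums)
  then have "C_gen d r q = gap_gf d r q (Suc d)"
    unfolding C_gen_def by (simp add: sums_iff)
  then show ?thesis by (simp add: block_gf_def)
qed

end


text \<open>A solution of \<open>D j = A j D (j+1) + B j D (j+2)\<close> tending to 0 vanishes when \<open>|A j| + |B j|\<close>
  exceeds 1 only by a summable amount: then \<open>max |D j| |D (j+1)|\<close> is bounded by a fixed
  multiple of its value arbitrarily far out.\<close>

lemma recurrence_max_norm_step:
  fixes D A B :: "nat \<Rightarrow> complex"
  assumes rec: "D j = A j * D (Suc j) + B j * D (Suc (Suc j))"
    and bound: "norm (A j) + norm (B j) \<le> 1 + e" and e: "0 \<le> e"
  shows "max (norm (D j)) (norm (D (Suc j))) \<le> (1 + e) * max (norm (D (Suc j))) (norm (D (Suc (Suc j))))"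
proof -
  define M where "M = max (norm (D (Suc j))) (norm (D (Suc (Suc j))))"
  have M: "0 \<le> M" unfolding M_def by (rule order.trans[OF norm_ge_zero max.cobounded1])
  have "norm (D j) \<le> norm (A j) * norm (D (Suc j)) + norm (B j) * norm (D (Suc (Suc j)))"
    using rec by (metis norm_mult norm_triangle_ineq)
  also have "\<dots> \<le> norm (A j) * M + norm (B j) * M"
    by (intro add_mono mult_left_mono) (auto simp: M_def)
  also have "\<dots> \<le> (1 + e) * M"
    using mult_right_mono[OF bound M] by (simp add: distrib_right)
  finally have "norm (D j) \<le> (1 + e) * M" .
  moreover have "norm (D (Suc j)) \<le> (1 + e) * M"
    using M e mult_le_cancel_right1[of M "1 + e"] by (simp add: M_def)
  ultimately show ?thesis by (simp add: M_def)
qed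

lemma recurrence_solution_eq_0:
  fixes D A B :: "nat \<Rightarrow> complex" and \<rho> C :: real
  assumes rec: "\<And>j. D j = A j * D (Suc j) + B j * D (Suc (Suc j))"
    and bound: "\<And>j. norm (A j) + norm (B j) \<le> 1 + C * \<rho> ^ j"
    and \<rho>: "0 \<le> \<rho>" "\<rho> < 1" and C: "0 \<le> C"
    and lim: "D \<longlonglongrightarrow> 0"
  shows "D j = 0"
proof -
  define M where "M j = max (norm (D j)) (norm (D (Suc j)))" for j
  have M0: "0 \<le> M j" for j unfolding M_def by (rule order.trans[OF norm_ge_zero max.cobounded1])
  have step: "M j \<le> (1 + C * \<rho> ^ j) * M (Suc j)" for j
    unfolding M_def by (rule recurrence_max_norm_step[where D = D and A = A and B = B, OF rec bound]) (use C \<rho> in simp)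
  have iter: "M j \<le> (\<Prod>i<k. 1 + C * \<rho> ^ (j + i)) * M (j + k)" for k
  proof (induction k)
    case (Suc k)
    have "(\<Prod>i<k. 1 + C * \<rho> ^ (j + i)) * M (j + k)
        \<le> (\<Prod>i<k. 1 + C * \<rho> ^ (j + i)) * ((1 + C * \<rho> ^ (j + k)) * M (Suc (j + k)))"
      by (intro mult_left_mono step prod_nonneg) (use C \<rho> in auto)
    then show ?case using Suc by (simp add: algebra_simps)
  qed simp
  have bound: "M j \<le> exp (C / (1 - \<rho>)) * M (j + k)" for k
    using iter[of k] prod_1_plus_geometric_le_exp[OF C \<rho>, where k = k and j = j] M0[of "j + k"]
    by (meson mult_right_mono order.trans)
  have "(\<lambda>k. exp (C / (1 - \<rho>)) * M (j + k)) \<longlonglongrightarrow> 0"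
  proof -
    have "(\<lambda>n. norm (D n)) \<longlonglongrightarrow> 0" using tendsto_norm[OF lim] by simp
    then have "M \<longlonglongrightarrow> max 0 0"
      unfolding M_def
      by (intro tendsto_max) (auto intro: filterlim_compose[OF _ filterlim_add_const_nat_at_top[of 1], simplified])
    then have "(\<lambda>k. M (k + j)) \<longlonglongrightarrow> 0"
      using filterlim_compose[OF _ filterlim_add_const_nat_at_top[of j]] by simp
    then show ?thesis by (intro tendsto_mult_right_zero) (simp add: add.commute)
  qed
  then have "M j \<le> 0" by (rule LIMSEQ_le_const) (use bound in auto)
  then show ?thesis by (simp add: M_def)
qed

theorem C_gen_eq_twin_prod_g3:
  fixes d r :: nat and q :: complex
  assumes "3 \<le> d" "1 \<le> r" "2 * r < d" and q: "norm q < 1" "q \<noteq> 0"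
  shows "C_gen d r q = twin_prod (q ^ r) (q ^ (d - r)) (q ^ d) 1 * g3 (- (q ^ r)) (q ^ d)"
proof -
  define Q where "Q = q ^ d"
  define a where "a = q ^ r"
  define b where "b = q ^ (d - r)"
  interpret twin_params a b Q
    using norm_power_less_one[OF q(1)] assms
    by unfold_locales (auto simp: Q_def a_def b_def power_add[symmetric])
  have G: "block_gf d r q j = (1 + (a + b) * Q ^ j) * block_gf d r q (Suc j)
      + Q ^ Suc j * (1 - Q ^ Suc j) * block_gf d r q (Suc (Suc j))" for j
    using block_gf_recurrence[OF assms(1-3) q(1), of j] by (simp only: Q_def a_def b_def)
  define D where "D j = block_gf d r q j - K (Q ^ j)" for j
  have rec: "D j = (1 + (a + b) * Q ^ j) * D (Suc j) + Q ^ Suc j * (1 - Q ^ Suc j) * D (Suc (Suc j))" for j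
  proof -
    have "D j = ((1 + (a + b) * Q ^ j) * block_gf d r q (Suc j) + Q ^ Suc j * (1 - Q ^ Suc j) * block_gf d r q (Suc (Suc j)))
        - ((1 + (a + b) * Q ^ j) * K (Q ^ Suc j) + Q ^ Suc j * (1 - Q ^ Suc j) * K (Q ^ Suc (Suc j)))"
      unfolding D_def by (subst G[of j], subst K_recurrence[of j], rule refl)
    then show ?thesis by (simp add: D_def algebra_simps)
  qed
  have lim: "D \<longlonglongrightarrow> 0"
    using tendsto_diff[OF block_gf_tendsto_1[OF assms(1-3) q(1)] K_power_tendsto_1] by (simp add: D_def[abs_def])
  have "D 1 = 0"
    by (rule recurrence_solution_eq_0[OF rec recurrence_coeff_bound _ _ _ lim]) (use Q in auto)
  then have "C_gen d r q = K Q"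
    using C_gen_eq_block_gf[OF assms(1-3) q(1)] by (simp add: D_def)
  also have "K Q = P 1 * g3 (- a) Q"
    using q(2) by (intro P_1_times_g3[symmetric]) (simp add: a_def)
  finally show ?thesis by (simp only: Q_def a_def b_def)
qed

theorem theorem1p2:
  fixes d r :: nat and \<tau> :: complex
  assumes "d \<ge> 3" and "1 \<le> r" and "2 * r < d" and "Im \<tau> > 0"
  shows "C_gen d r (qpow \<tau> 1) =
    - qpow \<tau> (- real d / 12 + real r / 2)
      * jtheta (1/2 + of_nat r * \<tau>) (of_nat d * \<tau>) / dedekind_eta (of_nat d * \<tau>)
      * g3 (- (qpow \<tau> 1 ^ r)) (qpow \<tau> 1 ^ d)"
proof -
  have q: "norm (qpow \<tau> 1) < 1" "qpow \<tau> 1 \<noteq> 0"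
    using norm_qpow_less_1[OF assms(4)] qpow_nonzero by simp_all
  have "C_gen d r (qpow \<tau> 1)
      = twin_prod (qpow \<tau> 1 ^ r) (qpow \<tau> 1 ^ (d - r)) (qpow \<tau> 1 ^ d) 1 * g3 (- (qpow \<tau> 1 ^ r)) (qpow \<tau> 1 ^ d)"
    by (rule C_gen_eq_twin_prod_g3[OF assms(1-3) q])
  also have "twin_prod (qpow \<tau> 1 ^ r) (qpow \<tau> 1 ^ (d - r)) (qpow \<tau> 1 ^ d) 1
      = - qpow \<tau> (- real d / 12 + real r / 2)
        * jtheta (1/2 + of_nat r * \<tau>) (of_nat d * \<tau>) / dedekind_eta (of_nat d * \<tau>)"
    by (rule theta_quotient_eq_twin_prod[symmetric]) (use assms in auto)
  finally show ?thesis .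
qed

end
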